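(* Let $\gamma:\mathbb N\to[0,1]$ be a rate function. For every process distribution $\mu\in\mathscr C^\beta$ with coordinate process $\mathbf X$, $\mu$-almost surely \[\lim_{t\to\infty}\widetilde g_t(\mathbf X)=\begin{cases}+1&\text{if }\mu\in\mathscr C^\beta\cap\mathscr R^\beta_\gamma,\\-1&\text{if }\mu\in\mathscr C^\beta\setminus\mathscr R^\beta_\gamma.\end{cases}\]
   Context: $X_t$ is the $t$-th coordinate of $[0,1]^{\mathbb N}$. $\beta(\mathfrak U,\mathfrak V):=\sup_{W\in\mathfrak U\otimes\mathfrak V}|\mu_\otimes(W)-(\mu_{\mathfrak U}\times\mu_{\mathfrak V})(W)|$ ($\mu_\otimes$ pushforward of $\mu$ under $\omega\mapsto(\omega,\omega)$, $\mu_{\mathfrak U},\mu_{\mathfrak V}$ restrictions); $\beta(m):=\sup_j\beta(\sigma(X_1,\dots,X_j),\sigma(X_t:t\ge j+m))$; $\|\boldsymbol\beta\|:=\sum_m\beta(m)$. $\mathscr C^\beta$ is the class of stationary $\beta$-mixing processes with $\|\boldsymbol\beta\|<\infty$; $\mathscr R^\beta_\gamma$ the class of processes with $\beta(m)\le\gamma(m)$ for all $m$. Dyadic cubes: $I_{\ell,i}=[i2^{-\ell},(i+1)2^{-\ell})$, $i=0,\dots,2^\ell-1$ (last interval closed); $\Delta_{k,\ell}$ the set of cubes $I_{\ell,i_1}\times\cdots\times I_{\ell,i_k}$. Empirical estimator: for $n>m$, $j\in\{1,\dots,n-m\}$, $j':=n-m-j+1$, $\mu_t(\mathbf X,B):=\frac1t\sum_{i=0}^{t-1}\mathbf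 1\{(X_{ik+1},\dots,X_{(i+1)k})\in B\}$, $\gamma_{t,n}^{m,j}(\mathbf X,A,B):=\frac1t\sum_{i=0}^{t-1}\mathbf 1\{(X_{in+1},\dots,X_{in+j})\in A\}\mathbf 1\{(X_{in+j+m},\dots,X_{(i+1)n})\in B\}$, $\widehat\beta_{t,n}^{\ell}(\mathbf X,m):=\max_{j}\frac12\sum_{A\in\Delta_{j,\ell}}\sum_{B\in\Delta_{j',\ell}}|\gamma_{t,n}^{m,j}(\mathbf X,A,B)-\mu_t(\mathbf X,A)\mu_t(\mathbf X,B)|$. Parameters: $(M_t),(\ell_t),(n_t)$ increasing positive integer sequences with $n_t>M_t$; $\delta\in(0,1)$, $(\delta_t)$ positive with $\sum_t\delta_t=\delta$; $(\epsilon_t)$ decreasing positive with $\epsilon_t\to0$. With $\widetilde C_{m,\ell,n}:=m\cdot2^{2^{2n\ell+1}+2^{m\ell+1}+2}$, $\widetilde\tau_t(m):=\lceil\widetilde C_{m,\ell_t,n_t}/(m\epsilon_t^2\delta_t)\rceil$ and $\widehat\beta_t(\mathbf X,m):=\widehat\beta_{\widetilde\tau_t(m),n_t}^{\ell_t}(\mathbf X,m)$. The test is $\widetilde g_t(\mathbf X):=+1$ if $\widehat\beta_t(\mathbf X,m)\le\gamma(m)+\epsilon_t$ for all $m\in\{1,\dots,M_t\}$, and $-1$ otherwise. *)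

theory Defs
  imports "HOL-Probability.Probability"
begin

text \<open>The path space [0,1]^N with its product sigma-algebra.  A path is
  omega :: nat => real; the coordinate X_t (t >= 1) is omega (t - 1).\<close>

definition Omega :: "(nat \<Rightarrow> real) measure" where
  "Omega = (\<Pi>\<^sub>M i\<in>(UNIV::nat set). restrict_space borel {0..1::real})"

definition coord :: "nat \<Rightarrow> (nat \<Rightarrow> real) \<Rightarrow> real" where
  "coord t \<omega> = \<omega> (t - 1)"

definition process_distribution :: "(nat \<Rightarrow> real) measure \<Rightarrow> bool" where
  "process_distribution \<mu> \<longleftrightarrow> prob_space \<mu> \<and> sets \<mu> = sets Omega"

definition shift :: "(nat \<Rightarrow> real) \<Rightarrow> (nat \<Rightarrow> real)" where
  "shift \<omega> = (\<lambda>i. \<omega> (Suc i))"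

definition stationary :: "(nat \<Rightarrow> real) measure \<Rightarrow> bool" where
  "stationary \<mu> \<longleftrightarrow> distr \<mu> \<mu> shift = \<mu>"

definition gen_alg :: "nat set \<Rightarrow> (nat \<Rightarrow> real) measure" where
  "gen_alg T = sigma (space Omega)
     (\<Union>t\<in>T. {coord t -` B \<inter> space Omega | B. B \<in> sets (borel :: real measure)})"

definition beta_sub :: "(nat \<Rightarrow> real) measure \<Rightarrow> (nat \<Rightarrow> real) measure \<Rightarrow> (nat \<Rightarrow> real) measure \<Rightarrow> real" where
  "beta_sub \<mu> U V =
     (let P = restr_to_subalg \<mu> U \<Otimes>\<^sub>M restr_to_subalg \<mu> V;
          D = distr \<mu> (U \<Otimes>\<^sub>M V) (\<lambda>\<omega>. (\<omega>, \<omega>))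
      in SUP W\<in>sets (U \<Otimes>\<^sub>M V). \<bar>measure D W - measure P W\<bar>)"

definition beta_coef :: "(nat \<Rightarrow> real) measure \<Rightarrow> nat \<Rightarrow> real" where
  "beta_coef \<mu> m = (SUP j\<in>{1..}. beta_sub \<mu> (gen_alg {1..j}) (gen_alg {j + m..}))"

definition class_C :: "(nat \<Rightarrow> real) measure \<Rightarrow> bool" where
  "class_C \<mu> \<longleftrightarrow> process_distribution \<mu> \<and> stationary \<mu> \<and>
     (\<lambda>m. beta_coef \<mu> m) \<longlonglongrightarrow> 0 \<and> summable (\<lambda>m. beta_coef \<mu> (Suc m))"

definition class_R :: "(nat \<Rightarrow> real) \<Rightarrow> (nat \<Rightarrow> real) measure \<Rightarrow> bool" where
  "class_R \<gamma> \<mu> \<longleftrightarrow> (\<forall>m\<ge>1. beta_coef \<mu> m \<le> \<gamma> m)"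

definition dyadic_int :: "nat \<Rightarrow> nat \<Rightarrow> real set" where
  "dyadic_int l i =
     (if i = 2 ^ l - 1 then {real i / 2 ^ l .. (real i + 1) / 2 ^ l}
      else {real i / 2 ^ l ..< (real i + 1) / 2 ^ l})"

text \<open>Delta_{k,l}: a cube I_{l,i_1} x ... x I_{l,i_k} is represented by its index list
  [i_1,...,i_k] with each i_r < 2^l.\<close>
definition dyadic_cubes :: "nat \<Rightarrow> nat \<Rightarrow> nat list set" where
  "dyadic_cubes k l = {c. length c = k \<and> (\<forall>i\<in>set c. i < 2 ^ l)}"

definition block_in :: "nat \<Rightarrow> nat list \<Rightarrow> nat \<Rightarrow> (nat \<Rightarrow> real) \<Rightarrow> bool" where
  "block_in l c s \<omega> \<longleftrightarrow> (\<forall>r<length c. coord (s + r) \<omega> \<in> dyadic_int l (c ! r))"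

definition emp_mu :: "nat \<Rightarrow> nat \<Rightarrow> (nat \<Rightarrow> real) \<Rightarrow> nat list \<Rightarrow> real" where
  "emp_mu l t \<omega> B = (1 / real t) *
     (\<Sum>i<t. if block_in l B (i * length B + 1) \<omega> then 1 else 0)"

definition emp_gamma :: "nat \<Rightarrow> nat \<Rightarrow> nat \<Rightarrow> nat \<Rightarrow> nat \<Rightarrow> (nat \<Rightarrow> real) \<Rightarrow> nat list \<Rightarrow> nat list \<Rightarrow> real" where
  "emp_gamma l t n m j \<omega> A B = (1 / real t) *
     (\<Sum>i<t. if block_in l A (i * n + 1) \<omega> \<and> block_in l B (i * n + j + m) \<omega> then 1 else 0)"

definition beta_hat :: "nat \<Rightarrow> nat \<Rightarrow> nat \<Rightarrow> (nat \<Rightarrow> real) \<Rightarrow> nat \<Rightarrow> real" where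
  "beta_hat l t n \<omega> m =
     Max ((\<lambda>j. (1/2) * (\<Sum>A\<in>dyadic_cubes j l. \<Sum>B\<in>dyadic_cubes (n - m - j + 1) l.
              \<bar>emp_gamma l t n m j \<omega> A B - emp_mu l t \<omega> A * emp_mu l t \<omega> B\<bar>)) ` {1..n - m})"

definition C_tilde :: "nat \<Rightarrow> nat \<Rightarrow> nat \<Rightarrow> real" where
  "C_tilde m l n = real m * 2 ^ (2 ^ (2 * n * l + 1) + 2 ^ (m * l + 1) + 2)"

definition tau_tilde :: "(nat \<Rightarrow> nat) \<Rightarrow> (nat \<Rightarrow> nat) \<Rightarrow> (nat \<Rightarrow> real) \<Rightarrow> (nat \<Rightarrow> real) \<Rightarrow> nat \<Rightarrow> nat \<Rightarrow> nat" where
  "tau_tilde ls ns eps dl t m =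
     nat \<lceil>C_tilde m (ls t) (ns t) / (real m * (eps t)\<^sup>2 * dl t)\<rceil>"

definition beta_hat_t :: "(nat \<Rightarrow> nat) \<Rightarrow> (nat \<Rightarrow> nat) \<Rightarrow> (nat \<Rightarrow> real) \<Rightarrow> (nat \<Rightarrow> real) \<Rightarrow> nat \<Rightarrow> (nat \<Rightarrow> real) \<Rightarrow> nat \<Rightarrow> real" where
  "beta_hat_t ls ns eps dl t \<omega> m =
     beta_hat (ls t) (tau_tilde ls ns eps dl t m) (ns t) \<omega> m"

definition test_g :: "(nat \<Rightarrow> real) \<Rightarrow> (nat \<Rightarrow> nat) \<Rightarrow> (nat \<Rightarrow> nat) \<Rightarrow> (nat \<Rightarrow> nat) \<Rightarrow> (nat \<Rightarrow> real) \<Rightarrow> (nat \<Rightarrow> real) \<Rightarrow> nat \<Rightarrow> (nat \<Rightarrow> real) \<Rightarrow> real" where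
  "test_g \<gamma> Ms ls ns eps dl t \<omega> =
     (if \<forall>m\<in>{1..Ms t}. beta_hat_t ls ns eps dl t \<omega> m \<le> \<gamma> m + eps t then 1 else -1)"

end

theory Submission
  imports Defs
begin

(* The population counterpart of the estimator, half the total variation distance between the
   joint law of a discretised past block and future block and the product of its marginals,
   is the beta-distance restricted to a finite sub-sigma-algebra, so it never exceeds beta(m);
   since dyadic rectangles generate the past-future product sigma-algebra, it also approximates
   beta(m) from below as the resolution and the block length grow.  The empirical block
   frequencies are averages of indicators of beta-mixing blocks, whose second moment is O(tau)
   because the beta-coefficients are summable.  Chebyshev's inequality with the sample size
   tau_t and a union bound over all cubes give failure probabilities bounded by a multiple of
   delta_t, so by Borel-Cantelli the estimator is eventually within 3 eps_t / 4 of its population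
   counterpart almost surely.  Hence the test eventually accepts when beta <= gamma, while if
   beta(m) > gamma(m) for some m the population statistic eventually exceeds gamma(m) by a fixed
   margin and the test eventually rejects. *)

lemma space_Omega: "space Omega = {\<omega>. \<forall>i. \<omega> i \<in> {0..1}}"
  by (auto simp: Omega_def space_PiM PiE_def Pi_def)

lemma coord_in_unit_interval: "\<omega> \<in> space Omega \<Longrightarrow> coord t \<omega> \<in> {0..1}"
  by (simp add: space_Omega coord_def)

lemma measurable_coord [measurable]: "coord t \<in> borel_measurable Omega"
proof -
  have "(\<lambda>\<omega>. \<omega> (t - 1)) \<in> measurable Omega (restrict_space borel {0..1::real})"
    unfolding Omega_def by (rule measurable_component_singleton) simp
  then show ?thesis
    unfolding coord_def[abs_def] using measurable_restrict_space2_iff by blast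
qed

lemma measurable_shift: "shift \<in> measurable Omega Omega"
proof -
  have "(\<lambda>\<omega> i. \<omega> (Suc i)) \<in> measurable Omega (\<Pi>\<^sub>M i\<in>UNIV. restrict_space borel {0..1::real})"
  proof (rule measurable_PiM_single')
    show "(\<lambda>\<omega>. \<omega> (Suc i)) \<in> measurable Omega (restrict_space borel {0..1::real})" for i
      unfolding Omega_def by (rule measurable_component_singleton) simp
  qed (auto simp: space_Omega space_restrict_space)
  then show ?thesis unfolding shift_def[abs_def] Omega_def[symmetric] .
qed

definition coord_generators :: "nat set \<Rightarrow> (nat \<Rightarrow> real) set set" where
  "coord_generators T = (\<Union>t\<in>T. {coord t -` B \<inter> space Omega | B. B \<in> sets (borel :: real measure)})"

lemma coord_generators_subset: "coord_generators T \<subseteq> sets Omega"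
  using measurable_sets[OF measurable_coord] by (auto simp: coord_generators_def)

lemma space_gen_alg [simp]: "space (gen_alg T) = space Omega"
  unfolding gen_alg_def by (auto intro!: space_measure_of)

lemma sets_gen_alg: "sets (gen_alg T) = sigma_sets (space Omega) (coord_generators T)"
  unfolding gen_alg_def coord_generators_def by (intro sets_measure_of) auto

lemma sets_gen_alg_subset: "sets (gen_alg T) \<subseteq> sets Omega"
  unfolding sets_gen_alg using coord_generators_subset by (rule sets.sigma_sets_subset)

lemma coord_preimage_in_gen_alg:
  assumes "t \<in> T" "B \<in> sets borel"
  shows "{\<omega>\<in>space Omega. coord t \<omega> \<in> B} \<in> sets (gen_alg T)"
proof -
  have "{\<omega>\<in>space Omega. coord t \<omega> \<in> B} \<in> coord_generators T"
    using assms unfolding coord_generators_def by blast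
  then show ?thesis unfolding sets_gen_alg by (rule sigma_sets.Basic)
qed

lemma measurable_into_gen_alg:
  assumes "\<And>t a. t \<in> T \<Longrightarrow> {w\<in>space N. coord t (f w) \<le> a} \<in> sets N"
    and "f \<in> space N \<rightarrow> space Omega"
  shows "f \<in> measurable N (gen_alg T)"
  unfolding gen_alg_def
proof (rule measurable_measure_of)
  fix Y assume "Y \<in> (\<Union>t\<in>T. {coord t -` B \<inter> space Omega |B. B \<in> sets borel})"
  then obtain t B where t: "t \<in> T" "B \<in> sets borel" and Y: "Y = coord t -` B \<inter> space Omega"
    by blast
  have "(\<lambda>w. coord t (f w)) \<in> borel_measurable N"
    unfolding borel_measurable_iff_le using assms(1)[OF t(1)] by blast
  moreover have "f -` Y \<inter> space N = (\<lambda>w. coord t (f w)) -` B \<inter> space N"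
    using assms(2) Y by auto
  ultimately show "f -` Y \<inter> space N \<in> sets N"
    using t(2) by (simp add: measurable_sets)
qed (use assms(2) in auto)

lemma dyadic_int_borel: "dyadic_int l i \<in> sets borel"
  unfolding dyadic_int_def by auto

definition block_set :: "nat \<Rightarrow> nat list \<Rightarrow> nat \<Rightarrow> (nat \<Rightarrow> real) set" where
  "block_set l c s = {\<omega>\<in>space Omega. block_in l c s \<omega>}"

lemma block_set_in_gen_alg:
  assumes "\<And>r. r < length c \<Longrightarrow> s + r \<in> T"
  shows "block_set l c s \<in> sets (gen_alg T)"
proof -
  have "block_set l c s =
      {\<omega>\<in>space (gen_alg T). \<forall>r\<in>{..<length c}. coord (s + r) \<omega> \<in> dyadic_int l (c ! r)}"
    by (auto simp: block_set_def block_in_def)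
  also have "\<dots> \<in> sets (gen_alg T)"
    by (intro sets.sets_Collect_finite_All)
       (auto intro!: coord_preimage_in_gen_alg assms dyadic_int_borel)
  finally show ?thesis .
qed

lemma block_set_Nil: "block_set l [] s = space Omega"
  by (auto simp: block_set_def block_in_def)

text \<open>The clamp puts \<open>x = 1\<close> into the last dyadic interval, which is the closed one.\<close>

definition dyadic_index :: "nat \<Rightarrow> real \<Rightarrow> nat" where
  "dyadic_index l x = min (nat \<lfloor>x * 2 ^ l\<rfloor>) (2 ^ l - 1)"

lemma dyadic_index_less: "dyadic_index l x < 2 ^ l"
  unfolding dyadic_index_def by (simp add: min.strict_coboundedI2)

lemma mem_dyadic_int_iff:
  assumes x: "x \<in> {0..1}" and i: "i < 2 ^ l"
  shows "x \<in> dyadic_int l i \<longleftrightarrow> dyadic_index l x = i"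
proof -
  define y where "y = x * 2 ^ l"
  have y: "0 \<le> y" "y \<le> 2 ^ l" and xy: "x = y / 2 ^ l" using x by (auto simp: y_def)
  show ?thesis
  proof (cases "i = 2 ^ l - 1")
    case True
    have "x \<in> dyadic_int l i \<longleftrightarrow> real i \<le> y"
      using True x y unfolding dyadic_int_def xy by (auto simp: divide_simps of_nat_diff)
    also have "\<dots> \<longleftrightarrow> i \<le> nat \<lfloor>y\<rfloor>"
      using y(1) by (simp add: le_nat_iff le_floor_iff)
    finally show ?thesis unfolding dyadic_index_def y_def[symmetric] using True by auto
  next
    case False
    then have "i < 2 ^ l - 1" using i by linarith
    moreover have "x \<in> dyadic_int l i \<longleftrightarrow> nat \<lfloor>y\<rfloor> = i"
      using False y(1) unfolding dyadic_int_def xy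
      by (auto simp: divide_simps nat_eq_iff floor_eq_iff)
    ultimately show ?thesis unfolding dyadic_index_def y_def[symmetric] by (auto simp: min_def)
  qed
qed

lemma dyadic_index_bounds:
  assumes "x \<in> {0..1}"
  shows "real (dyadic_index l x) / 2 ^ l \<le> x" "x \<le> real (dyadic_index l x) / 2 ^ l + 1 / 2 ^ l"
proof -
  have "x \<in> dyadic_int l (dyadic_index l x)"
    using mem_dyadic_int_iff[OF assms dyadic_index_less] by simp
  then have "real (dyadic_index l x) / 2 ^ l \<le> x" "x \<le> (real (dyadic_index l x) + 1) / 2 ^ l"
    unfolding dyadic_int_def by (auto split: if_splits)
  then show "real (dyadic_index l x) / 2 ^ l \<le> x" "x \<le> real (dyadic_index l x) / 2 ^ l + 1 / 2 ^ l"
    by (simp_all add: add_divide_distrib)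
qed

lemma dyadic_cubes_eq: "dyadic_cubes k l = {xs. set xs \<subseteq> {..<2 ^ l} \<and> length xs = k}"
  by (auto simp: dyadic_cubes_def)

lemma finite_dyadic_cubes: "finite (dyadic_cubes k l)"
  unfolding dyadic_cubes_eq by (rule finite_lists_length_eq) simp

lemma card_dyadic_cubes: "card (dyadic_cubes k l) = 2 ^ (l * k)"
  unfolding dyadic_cubes_eq by (subst card_lists_length_eq) (simp_all add: power_mult)

definition cube_of :: "nat \<Rightarrow> nat \<Rightarrow> nat \<Rightarrow> (nat \<Rightarrow> real) \<Rightarrow> nat list" where
  "cube_of l s k \<omega> = map (\<lambda>r. dyadic_index l (coord (s + r) \<omega>)) [0..<k]"

lemma cube_of_in_dyadic_cubes: "cube_of l s k \<omega> \<in> dyadic_cubes k l"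
  by (auto simp: cube_of_def dyadic_cubes_def dyadic_index_less)

lemma nth_cube_of: "r < k \<Longrightarrow> cube_of l s k \<omega> ! r = dyadic_index l (coord (s + r) \<omega>)"
  unfolding cube_of_def by (simp del: upt_Suc)

lemma mem_block_set_iff:
  assumes "\<omega> \<in> space Omega" "c \<in> dyadic_cubes k l"
  shows "\<omega> \<in> block_set l c s \<longleftrightarrow> cube_of l s k \<omega> = c"
proof -
  have len: "length c = k" using assms(2) by (simp add: dyadic_cubes_def)
  have "\<omega> \<in> block_set l c s \<longleftrightarrow> (\<forall>r<k. dyadic_index l (coord (s + r) \<omega>) = c ! r)"
    unfolding block_set_def block_in_def len using assms
    by (auto simp: mem_dyadic_int_iff[OF coord_in_unit_interval] dyadic_cubes_def)
  also have "\<dots> \<longleftrightarrow> cube_of l s k \<omega> = c"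
    unfolding cube_of_def using len by (auto simp: list_eq_iff_nth_eq)
  finally show ?thesis .
qed

lemma sym_diff_dyadic_half_line_subset:
  "sym_diff {\<omega>\<in>space Omega. coord t \<omega> \<le> a} {\<omega>\<in>space Omega. real (dyadic_index l (coord t \<omega>)) / 2 ^ l \<le> a}
     \<subseteq> {\<omega>\<in>space Omega. coord t \<omega> \<in> {a<..a + 1 / 2 ^ l}}"
proof
  fix \<omega> assume "\<omega> \<in> sym_diff {\<omega>\<in>space Omega. coord t \<omega> \<le> a}
      {\<omega>\<in>space Omega. real (dyadic_index l (coord t \<omega>)) / 2 ^ l \<le> a}"
  with dyadic_index_bounds[where l = l, OF coord_in_unit_interval[of \<omega> t]]
  show "\<omega> \<in> {\<omega>\<in>space Omega. coord t \<omega> \<in> {a<..a + 1 / 2 ^ l}}" by auto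
qed

definition cube_pairs :: "nat \<Rightarrow> nat \<Rightarrow> nat \<Rightarrow> nat \<Rightarrow> (nat list \<times> nat list) set" where
  "cube_pairs l n m j = dyadic_cubes j l \<times> dyadic_cubes (n - m - j + 1) l"

lemma finite_cube_pairs: "finite (cube_pairs l n m j)"
  by (simp add: cube_pairs_def finite_dyadic_cubes)

lemma card_cube_pairs_le:
  assumes "j + m \<le> n" "1 \<le> m"
  shows "real (card (cube_pairs l n m j)) \<le> 2 ^ (l * n)"
proof -
  have "card (cube_pairs l n m j) = 2 ^ (l * (j + (n - m - j + 1)))"
    by (simp add: cube_pairs_def card_cartesian_product card_dyadic_cubes power_add add_mult_distrib2)
  also have "\<dots> \<le> (2::nat) ^ (l * n)" using assms by (intro power_increasing mult_le_mono2) auto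
  finally show ?thesis by (metis of_nat_le_iff of_nat_numeral of_nat_power)
qed

definition cube_rect_set ::
    "nat \<Rightarrow> nat \<Rightarrow> nat \<Rightarrow> nat \<Rightarrow> (nat list \<times> nat list) set \<Rightarrow> ((nat \<Rightarrow> real) \<times> (nat \<Rightarrow> real)) set" where
  "cube_rect_set j m l n S = {p\<in>space Omega \<times> space Omega.
     (cube_of l 1 j (fst p), cube_of l (j + m) (n - m - j + 1) (snd p)) \<in> S}"

lemma cube_rect_set_Compl: "cube_rect_set j m l n (- S) = space Omega \<times> space Omega - cube_rect_set j m l n S"
  by (auto simp: cube_rect_set_def)

lemma cube_rect_set_UN: "cube_rect_set j m l n (\<Union>i\<in>I. S i) = (\<Union>i\<in>I. cube_rect_set j m l n (S i))"
  by (auto simp: cube_rect_set_def)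

lemma mem_cube_rect_iff:
  assumes "(A, B) \<in> cube_pairs l n m j"
  shows "p \<in> block_set l A 1 \<times> block_set l B (j + m) \<longleftrightarrow> p \<in> space Omega \<times> space Omega \<and>
    (cube_of l 1 j (fst p), cube_of l (j + m) (n - m - j + 1) (snd p)) = (A, B)"
  using assms mem_block_set_iff[of "fst p" A j l 1] mem_block_set_iff[of "snd p" B "n - m - j + 1" l "j + m"]
  by (cases p) (auto simp: cube_pairs_def block_set_def)

lemma cube_rect_set_eq_UN: "cube_rect_set j m l n S =
    (\<Union>AB\<in>S \<inter> cube_pairs l n m j. block_set l (fst AB) 1 \<times> block_set l (snd AB) (j + m))"
proof (intro set_eqI iffI)
  fix p assume p: "p \<in> cube_rect_set j m l n S"
  define A B where "A = cube_of l 1 j (fst p)" and "B = cube_of l (j + m) (n - m - j + 1) (snd p)"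
  have AB: "(A, B) \<in> cube_pairs l n m j" by (simp add: A_def B_def cube_pairs_def cube_of_in_dyadic_cubes)
  with p have "p \<in> block_set l A 1 \<times> block_set l B (j + m)"
    using mem_cube_rect_iff[OF AB] by (simp add: cube_rect_set_def A_def B_def)
  moreover have "(A, B) \<in> S" using p by (simp add: cube_rect_set_def A_def B_def)
  ultimately show "p \<in> (\<Union>AB\<in>S \<inter> cube_pairs l n m j. block_set l (fst AB) 1 \<times> block_set l (snd AB) (j + m))"
    using AB by force
next
  fix p assume "p \<in> (\<Union>AB\<in>S \<inter> cube_pairs l n m j. block_set l (fst AB) 1 \<times> block_set l (snd AB) (j + m))"
  then obtain A B where "(A, B) \<in> S" and AB: "(A, B) \<in> cube_pairs l n m j"
    and "p \<in> block_set l A 1 \<times> block_set l B (j + m)" by auto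
  then show "p \<in> cube_rect_set j m l n S"
    using mem_cube_rect_iff[OF AB] by (auto simp: cube_rect_set_def)
qed

lemma disjoint_family_cube_rects:
  "disjoint_family_on (\<lambda>AB. block_set l (fst AB) 1 \<times> block_set l (snd AB) (j + m)) (cube_pairs l n m j)"
  unfolding disjoint_family_on_def
proof (intro ballI impI equals0I)
  fix AB AB' p
  assume AB: "AB \<in> cube_pairs l n m j" and AB': "AB' \<in> cube_pairs l n m j" and "AB \<noteq> AB'"
    and p: "p \<in> (block_set l (fst AB) 1 \<times> block_set l (snd AB) (j + m)) \<inter>
      (block_set l (fst AB') 1 \<times> block_set l (snd AB') (j + m))"
  have "(cube_of l 1 j (fst p), cube_of l (j + m) (n - m - j + 1) (snd p)) = AB"
    using p mem_cube_rect_iff[of "fst AB" "snd AB" l n m j p] AB by simp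
  moreover have "(cube_of l 1 j (fst p), cube_of l (j + m) (n - m - j + 1) (snd p)) = AB'"
    using p mem_cube_rect_iff[of "fst AB'" "snd AB'" l n m j p] AB' by simp
  ultimately show False using \<open>AB \<noteq> AB'\<close> by simp
qed

lemma cube_rect_in_sets:
  assumes "AB \<in> cube_pairs l n m j"
  shows "block_set l (fst AB) 1 \<in> sets (gen_alg {1..j})"
    and "block_set l (snd AB) (j + m) \<in> sets (gen_alg {j + m..})"
  using assms by (auto intro!: block_set_in_gen_alg simp: cube_pairs_def dyadic_cubes_def)

lemma cube_rect_set_in_sets: "cube_rect_set j m l n S \<in> sets (gen_alg {1..j} \<Otimes>\<^sub>M gen_alg {j + m..})"
  unfolding cube_rect_set_eq_UN
  using cube_rect_in_sets finite_cube_pairs by (intro sets.finite_UN) auto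

definition half_line_generators :: "nat \<Rightarrow> nat \<Rightarrow> ((nat \<Rightarrow> real) \<times> (nat \<Rightarrow> real)) set set" where
  "half_line_generators j m =
     {{p\<in>space Omega \<times> space Omega. coord t (fst p) \<le> a} | t a. t \<in> {1..j}} \<union>
     {{p\<in>space Omega \<times> space Omega. coord t (snd p) \<le> a} | t a. j + m \<le> t}"

lemma half_line_generators_subset:
  "half_line_generators j m \<subseteq> sets (gen_alg {1..j} \<Otimes>\<^sub>M gen_alg {j + m..})"
proof
  fix X assume "X \<in> half_line_generators j m"
  then consider t a where "t \<in> {1..j}" "X = {\<omega>\<in>space Omega. coord t \<omega> \<in> {..a}} \<times> space Omega"
    | t a where "j + m \<le> t" "X = space Omega \<times> {\<omega>\<in>space Omega. coord t \<omega> \<in> {..a}}"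
    unfolding half_line_generators_def by fastforce
  then show "X \<in> sets (gen_alg {1..j} \<Otimes>\<^sub>M gen_alg {j + m..})"
  proof cases
    case 1
    moreover have "space Omega \<in> sets (gen_alg {j + m..})" using sets.top[of "gen_alg {j + m..}"] by simp
    moreover have "{\<omega>\<in>space Omega. coord t \<omega> \<in> {..a}} \<in> sets (gen_alg {1..j})"
      using 1 by (intro coord_preimage_in_gen_alg) auto
    ultimately show ?thesis by auto
  next
    case 2
    moreover have "space Omega \<in> sets (gen_alg {1..j})" using sets.top[of "gen_alg {1..j}"] by simp
    moreover have "{\<omega>\<in>space Omega. coord t \<omega> \<in> {..a}} \<in> sets (gen_alg {j + m..})"
      using 2 by (intro coord_preimage_in_gen_alg) auto
    ultimately show ?thesis by auto
  qed
qed

lemma sets_gen_alg_pair_eq: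
  "sets (gen_alg {1..j} \<Otimes>\<^sub>M gen_alg {j + m..}) =
     sigma_sets (space Omega \<times> space Omega) (half_line_generators j m)"
proof
  show "sigma_sets (space Omega \<times> space Omega) (half_line_generators j m) \<subseteq>
      sets (gen_alg {1..j} \<Otimes>\<^sub>M gen_alg {j + m..})"
    using sets.sigma_sets_subset[OF half_line_generators_subset] by (simp add: space_pair_measure)
  define N where "N = sigma (space Omega \<times> space Omega) (half_line_generators j m)"
  have gens_Pow: "half_line_generators j m \<subseteq> Pow (space Omega \<times> space Omega)"
    by (auto simp: half_line_generators_def)
  have space_N: "space N = space Omega \<times> space Omega"
    and sets_N: "sets N = sigma_sets (space Omega \<times> space Omega) (half_line_generators j m)"
    using gens_Pow by (simp_all add: N_def)
  have "fst \<in> measurable N (gen_alg {1..j})"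
  proof (rule measurable_into_gen_alg)
    fix t a assume "t \<in> {1..j}"
    then have "{w\<in>space N. coord t (fst w) \<le> a} \<in> half_line_generators j m"
      unfolding space_N half_line_generators_def by blast
    then show "{w\<in>space N. coord t (fst w) \<le> a} \<in> sets N" unfolding sets_N by (rule sigma_sets.Basic)
  qed (auto simp: space_N)
  moreover have "snd \<in> measurable N (gen_alg {j + m..})"
  proof (rule measurable_into_gen_alg)
    fix t a assume "t \<in> {j + m..}"
    then have "{w\<in>space N. coord t (snd w) \<le> a} \<in> half_line_generators j m"
      unfolding space_N half_line_generators_def by auto
    then show "{w\<in>space N. coord t (snd w) \<le> a} \<in> sets N" unfolding sets_N by (rule sigma_sets.Basic)
  qed (auto simp: space_N)
  ultimately have idm: "(\<lambda>x. x) \<in> measurable N (gen_alg {1..j} \<Otimes>\<^sub>M gen_alg {j + m..})"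
    unfolding measurable_pair_iff by (simp add: comp_def)
  show "sets (gen_alg {1..j} \<Otimes>\<^sub>M gen_alg {j + m..}) \<subseteq>
      sigma_sets (space Omega \<times> space Omega) (half_line_generators j m)"
  proof
    fix X assume X: "X \<in> sets (gen_alg {1..j} \<Otimes>\<^sub>M gen_alg {j + m..})"
    have "(\<lambda>x. x) -` X \<inter> space N \<in> sets N" by (rule measurable_sets[OF idm X])
    moreover have "X \<subseteq> space N" using sets.sets_into_space[OF X] by (simp add: space_pair_measure space_N)
    ultimately show "X \<in> sigma_sets (space Omega \<times> space Omega) (half_line_generators j m)"
      by (simp add: sets_N Int_absorb2)
  qed
qed

lemma sym_diff_cube_rect_set_fst_half_line:
  assumes "t \<in> {1..j}"
  shows "sym_diff {p\<in>space Omega \<times> space Omega. coord t (fst p) \<le> a}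
      (cube_rect_set j m l n {AB. real (fst AB ! (t - 1)) / 2 ^ l \<le> a})
    \<subseteq> {\<omega>\<in>space Omega. coord t \<omega> \<in> {a<..a + 1 / 2 ^ l}} \<times> space Omega"
proof -
  have "cube_rect_set j m l n {AB. real (fst AB ! (t - 1)) / 2 ^ l \<le> a} =
      {\<omega>\<in>space Omega. real (dyadic_index l (coord t \<omega>)) / 2 ^ l \<le> a} \<times> space Omega"
    using assms by (auto simp: cube_rect_set_def nth_cube_of)
  then show ?thesis using sym_diff_dyadic_half_line_subset[of t a l] by auto
qed

lemma sym_diff_cube_rect_set_snd_half_line:
  assumes "j + m \<le> t" "t \<le> n"
  shows "sym_diff {p\<in>space Omega \<times> space Omega. coord t (snd p) \<le> a}
      (cube_rect_set j m l n {AB. real (snd AB ! (t - (j + m))) / 2 ^ l \<le> a})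
    \<subseteq> space Omega \<times> {\<omega>\<in>space Omega. coord t \<omega> \<in> {a<..a + 1 / 2 ^ l}}"
proof -
  have "t - (j + m) < n - m - j + 1" "j + m + (t - (j + m)) = t" using assms by auto
  then have "cube_rect_set j m l n {AB. real (snd AB ! (t - (j + m))) / 2 ^ l \<le> a} =
      space Omega \<times> {\<omega>\<in>space Omega. real (dyadic_index l (coord t \<omega>)) / 2 ^ l \<le> a}"
    by (auto simp: cube_rect_set_def nth_cube_of)
  then show ?thesis using sym_diff_dyadic_half_line_subset[of t a l] by auto
qed

section \<open>Concentration of block frequencies\<close>

lemma sum_row_le_one_plus_twice:
  fixes a c :: "nat \<Rightarrow> real"
  assumes i: "i < \<tau>" and diag: "a i \<le> 1"
    and before: "\<And>k. k < i \<Longrightarrow> a k \<le> c (i - k)"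
    and after: "\<And>k. i < k \<Longrightarrow> k < \<tau> \<Longrightarrow> a k \<le> c (k - i)"
    and c_nonneg: "\<And>d. 0 \<le> c d" and c_sum: "\<And>N. (\<Sum>d=1..N. c d) \<le> B"
  shows "(\<Sum>k<\<tau>. a k) \<le> 1 + 2 * B"
proof -
  have tail_le: "(\<Sum>k\<in>K. c (h k)) \<le> B" if "inj_on h K" "h ` K \<subseteq> {1..N}" for h K N
  proof -
    have "(\<Sum>k\<in>K. c (h k)) = (\<Sum>d\<in>h ` K. c d)" using that(1) by (simp add: sum.reindex)
    also have "\<dots> \<le> (\<Sum>d=1..N. c d)" using that(2) c_nonneg by (intro sum_mono2) auto
    finally show ?thesis using c_sum[of N] by linarith
  qed
  have split: "{..<\<tau>} = {..<i} \<union> {i} \<union> {i<..<\<tau>}" using i by auto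
  have "(\<Sum>k<\<tau>. a k) = (\<Sum>k<i. a k) + a i + (\<Sum>k\<in>{i<..<\<tau>}. a k)"
    unfolding split by (subst sum.union_disjoint; auto)+
  also have "(\<Sum>k<i. a k) \<le> (\<Sum>k<i. c (i - k))" by (intro sum_mono before) simp
  also have "(\<Sum>k<i. c (i - k)) \<le> B"
    by (rule tail_le[of _ _ i]) (auto simp: inj_on_def)
  also have "(\<Sum>k\<in>{i<..<\<tau>}. a k) \<le> (\<Sum>k\<in>{i<..<\<tau>}. c (k - i))" by (intro sum_mono after) auto
  also have "(\<Sum>k\<in>{i<..<\<tau>}. c (k - i)) \<le> B"
    by (rule tail_le[of _ _ \<tau>]) (auto simp: inj_on_def)
  finally show ?thesis using diag by linarith
qed

definition frequency :: "nat \<Rightarrow> (nat \<Rightarrow> 'a set) \<Rightarrow> 'a \<Rightarrow> real" where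
  "frequency \<tau> E x = (\<Sum>i<\<tau>. indicator (E i) x) / real \<tau>"

lemma frequency_nonneg: "0 \<le> frequency \<tau> E x"
  by (simp add: frequency_def sum_nonneg)

lemma frequency_le_1: "frequency \<tau> E x \<le> 1"
proof -
  have "(\<Sum>i<\<tau>. indicator (E i) x) \<le> (\<Sum>i<\<tau>. 1 :: real)"
    by (intro sum_mono) (simp add: indicator_def)
  then show ?thesis by (cases "\<tau> = 0") (simp_all add: frequency_def divide_le_eq_1)
qed

lemma (in prob_space) covariance_indicators:
  assumes "A \<in> events" "B \<in> events" "prob A = p" "prob B = p"
  shows "integrable M (\<lambda>x. (indicator A x - p) * (indicator B x - p :: real))"
    and "(\<integral>x. (indicator A x - p) * (indicator B x - p :: real) \<partial>M) = prob (A \<inter> B) - p\<^sup>2"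
proof -
  have eq: "(\<lambda>x. (indicator A x - p) * (indicator B x - p :: real)) =
      (\<lambda>x. indicator (A \<inter> B) x - p * indicator A x - p * indicator B x + p\<^sup>2)"
    by (auto simp: indicator_def power2_eq_square algebra_simps)
  have int: "integrable M (indicator C :: 'a \<Rightarrow> real)" if "C \<in> events" for C
    using that by (simp add: emeasure_eq_measure)
  show "integrable M (\<lambda>x. (indicator A x - p) * (indicator B x - p :: real))"
    unfolding eq using assms(1,2) by (simp add: int)
  show "(\<integral>x. (indicator A x - p) * (indicator B x - p :: real) \<partial>M) = prob (A \<inter> B) - p\<^sup>2"
    unfolding eq using assms by (simp add: int prob_space power2_eq_square)
qed

lemma (in prob_space) second_moment_centered_indicator_sum:
  fixes E :: "nat \<Rightarrow> 'a set"
  assumes E: "\<And>i. E i \<in> events" and p: "\<And>i. prob (E i) = p"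
    and cov: "\<And>i k. i < k \<Longrightarrow> \<bar>prob (E i \<inter> E k) - p\<^sup>2\<bar> \<le> c (k - i)"
    and c_nonneg: "\<And>d. 0 \<le> c d" and c_sum: "\<And>N. (\<Sum>d=1..N. c d) \<le> B"
  shows "integrable M (\<lambda>x. (\<Sum>i<\<tau>. indicator (E i) x - p :: real)\<^sup>2)"
    and "(\<integral>x. (\<Sum>i<\<tau>. indicator (E i) x - p :: real)\<^sup>2 \<partial>M) \<le> real \<tau> * (1 + 2 * B)"
proof -
  have square: "(\<Sum>i<\<tau>. indicator (E i) x - p :: real)\<^sup>2 =
      (\<Sum>i<\<tau>. \<Sum>k<\<tau>. (indicator (E i) x - p) * (indicator (E k) x - p))" for x
    unfolding power2_eq_square by (simp add: sum_product)
  note covariance = covariance_indicators[OF E E p p]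
  show "integrable M (\<lambda>x. (\<Sum>i<\<tau>. indicator (E i) x - p :: real)\<^sup>2)"
    unfolding square by (simp add: covariance)
  have row: "(\<Sum>k<\<tau>. prob (E i \<inter> E k) - p\<^sup>2) \<le> 1 + 2 * B" if "i < \<tau>" for i
  proof (rule sum_row_le_one_plus_twice[OF that _ _ _ c_nonneg c_sum])
    show "prob (E i \<inter> E i) - p\<^sup>2 \<le> 1"
      unfolding Int_absorb using prob_le_1[of "E i"] zero_le_power2[of p] by linarith
    show "prob (E i \<inter> E k) - p\<^sup>2 \<le> c (i - k)" if "k < i" for k
      using cov[OF that] by (simp add: Int_commute abs_le_iff)
    show "prob (E i \<inter> E k) - p\<^sup>2 \<le> c (k - i)" if "i < k" for k
      using cov[OF that] by (simp add: abs_le_iff)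
  qed
  have "(\<integral>x. (\<Sum>i<\<tau>. indicator (E i) x - p :: real)\<^sup>2 \<partial>M) = (\<Sum>i<\<tau>. \<Sum>k<\<tau>. prob (E i \<inter> E k) - p\<^sup>2)"
    unfolding square by (simp add: covariance)
  also have "\<dots> \<le> (\<Sum>i<\<tau>. 1 + 2 * B)" by (intro sum_mono row) simp
  finally show "(\<integral>x. (\<Sum>i<\<tau>. indicator (E i) x - p :: real)\<^sup>2 \<partial>M) \<le> real \<tau> * (1 + 2 * B)" by simp
qed

lemma (in prob_space) prob_frequency_deviation_le:
  fixes E :: "nat \<Rightarrow> 'a set"
  assumes E: "\<And>i. E i \<in> events" and p: "\<And>i. prob (E i) = p"
    and cov: "\<And>i k. i < k \<Longrightarrow> \<bar>prob (E i \<inter> E k) - p\<^sup>2\<bar> \<le> c (k - i)"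
    and c_nonneg: "\<And>d. 0 \<le> c d" and c_sum: "\<And>N. (\<Sum>d=1..N. c d) \<le> B"
    and \<tau>: "0 < \<tau>" and \<eta>: "0 < \<eta>"
  shows "prob {x\<in>space M. \<eta> \<le> \<bar>frequency \<tau> E x - p\<bar>} \<le> (1 + 2 * B) / (real \<tau> * \<eta>\<^sup>2)"
proof -
  define Z where "Z x = (\<Sum>i<\<tau>. indicator (E i) x - p :: real)" for x
  note second_moment = second_moment_centered_indicator_sum[OF E p cov c_nonneg c_sum, of \<tau>,
      folded Z_def]
  have "frequency \<tau> E x - p = Z x / real \<tau>" for x
    using \<tau> by (simp add: frequency_def Z_def sum_subtractf field_simps)
  then have "{x\<in>space M. \<eta> \<le> \<bar>frequency \<tau> E x - p\<bar>} = {x\<in>space M. real \<tau> * \<eta> \<le> \<bar>Z x\<bar>}"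
    using \<tau> by (simp add: pos_le_divide_eq mult.commute)
  also have "prob \<dots> \<le> (\<integral>x. (Z x)\<^sup>2 \<partial>M) / (real \<tau> * \<eta>)\<^sup>2"
    using E second_moment(1) \<tau> \<eta> by (intro second_moment_method) (auto simp: Z_def)
  also have "\<dots> \<le> real \<tau> * (1 + 2 * B) / (real \<tau> * \<eta>)\<^sup>2"
    using second_moment(2) by (simp add: divide_right_mono)
  also have "\<dots> = (1 + 2 * B) / (real \<tau> * \<eta>\<^sup>2)"
    using \<tau> \<eta> by (simp add: power2_eq_square field_simps)
  finally show ?thesis .
qed

lemma emp_mu_eq_frequency:
  assumes "x \<in> space Omega"
  shows "emp_mu l \<tau> x A = frequency \<tau> (\<lambda>i. block_set l A (i * length A + 1)) x"
proof -
  have "(\<Sum>i<\<tau>. if block_in l A (i * length A + 1) x then 1 else 0) =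
      (\<Sum>i<\<tau>. indicator (block_set l A (i * length A + 1)) x :: real)"
    using assms by (intro sum.cong) (auto simp: block_set_def)
  then show ?thesis by (simp add: emp_mu_def frequency_def)
qed

lemma emp_gamma_eq_frequency:
  assumes "x \<in> space Omega"
  shows "emp_gamma l \<tau> n m j x A B =
    frequency \<tau> (\<lambda>i. block_set l A (i * n + 1) \<inter> block_set l B (i * n + j + m)) x"
proof -
  have "(\<Sum>i<\<tau>. if block_in l A (i * n + 1) x \<and> block_in l B (i * n + j + m) x then 1 else 0) =
      (\<Sum>i<\<tau>. indicator (block_set l A (i * n + 1) \<inter> block_set l B (i * n + j + m)) x :: real)"
    using assms by (intro sum.cong) (auto simp: block_set_def)
  then show ?thesis by (simp add: emp_gamma_def frequency_def)
qed

definition beta_hat_term :: "nat \<Rightarrow> nat \<Rightarrow> nat \<Rightarrow> (nat \<Rightarrow> real) \<Rightarrow> nat \<Rightarrow> nat \<Rightarrow> real" where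
  "beta_hat_term l \<tau> n x m j = (1/2) * (\<Sum>A\<in>dyadic_cubes j l. \<Sum>B\<in>dyadic_cubes (n - m - j + 1) l.
       \<bar>emp_gamma l \<tau> n m j x A B - emp_mu l \<tau> x A * emp_mu l \<tau> x B\<bar>)"

lemma beta_hat_eq_Max: "beta_hat l \<tau> n x m = Max ((\<lambda>j. beta_hat_term l \<tau> n x m j) ` {1..n - m})"
  unfolding beta_hat_def beta_hat_term_def ..

section \<open>Approximation in a generated sigma-algebra\<close>

definition approximable_by ::
    "'a measure \<Rightarrow> 'a measure \<Rightarrow> 'i filter \<Rightarrow> ('i \<Rightarrow> 'c set \<Rightarrow> 'a set) \<Rightarrow> 'a set \<Rightarrow> bool" where
  "approximable_by M1 M2 F R W \<longleftrightarrow> (\<forall>e>0. eventually (\<lambda>i. \<exists>S.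
      measure M1 (sym_diff W (R i S)) < e \<and> measure M2 (sym_diff W (R i S)) < e) F)"

lemma (in finite_measure) measure_sym_diff_le:
  assumes "A \<in> sets M" "B \<in> sets M"
  shows "\<bar>measure M A - measure M B\<bar> \<le> measure M (sym_diff A B)"
proof -
  have "measure M A \<le> measure M (B \<union> sym_diff A B)" "measure M B \<le> measure M (A \<union> sym_diff A B)"
    using assms by (auto intro!: finite_measure_mono)
  moreover have "measure M (B \<union> sym_diff A B) \<le> measure M B + measure M (sym_diff A B)"
    "measure M (A \<union> sym_diff A B) \<le> measure M A + measure M (sym_diff A B)"
    using assms by (auto intro!: measure_Un_le)
  ultimately show ?thesis by linarith
qed

lemma (in finite_measure) measure_sym_diff_UN_less:
  assumes A: "\<And>i. A i \<in> sets M" and B: "\<And>i. B i \<in> sets M" and k: "0 < k"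
    and tail: "measure M (\<Union>i. A i) - measure M (\<Union>i<k. A i) < e / 2"
    and close: "\<And>i. i < k \<Longrightarrow> measure M (sym_diff (A i) (B i)) < e / (2 * real k)"
  shows "measure M (sym_diff (\<Union>i. A i) (\<Union>i<k. B i)) < e"
proof -
  have sets: "(\<Union>i. A i) \<in> sets M" "(\<Union>i<k. A i) \<in> sets M" "sym_diff (A i) (B i) \<in> sets M" for i
    using A B by auto
  have "sym_diff (\<Union>i. A i) (\<Union>i<k. B i) \<subseteq> ((\<Union>i. A i) - (\<Union>i<k. A i)) \<union> (\<Union>i<k. sym_diff (A i) (B i))"
    by blast
  then have "measure M (sym_diff (\<Union>i. A i) (\<Union>i<k. B i))
      \<le> measure M (((\<Union>i. A i) - (\<Union>i<k. A i)) \<union> (\<Union>i<k. sym_diff (A i) (B i)))"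
    using sets by (intro finite_measure_mono) auto
  also have "\<dots> \<le> measure M ((\<Union>i. A i) - (\<Union>i<k. A i)) + measure M (\<Union>i<k. sym_diff (A i) (B i))"
    using sets by (intro measure_Un_le) auto
  also have "measure M ((\<Union>i. A i) - (\<Union>i<k. A i)) = measure M (\<Union>i. A i) - measure M (\<Union>i<k. A i)"
    using sets by (intro finite_measure_Diff) auto
  also have "measure M (\<Union>i<k. sym_diff (A i) (B i)) \<le> (\<Sum>i<k. measure M (sym_diff (A i) (B i)))"
    using sets by (intro measure_UNION_le) auto
  also have "\<dots> < (\<Sum>i<k. e / (2 * real k))"
    using k close by (intro sum_strict_mono) auto
  also have "\<dots> = e / 2" using k by simp
  finally show ?thesis using tail by linarith
qed

lemma (in finite_measure) tendsto_measure_UN_lessThan: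
  fixes A :: "nat \<Rightarrow> 'a set"
  assumes "\<And>i. A i \<in> sets M"
  shows "(\<lambda>k. measure M (\<Union>i<k. A i)) \<longlonglongrightarrow> measure M (\<Union>i. A i)"
proof -
  have "incseq (\<lambda>k. \<Union>i<k. A i)" unfolding incseq_def by (intro allI impI UN_mono) auto
  moreover have "range (\<lambda>k. \<Union>i<k. A i) \<subseteq> sets M" using assms by auto
  moreover have "(\<Union>k. \<Union>i<k. A i) = (\<Union>i. A i)" by blast
  ultimately show ?thesis using finite_Lim_measure_incseq[of "\<lambda>k. \<Union>i<k. A i"] by simp
qed

lemma approximable_by_UN:
  fixes A :: "nat \<Rightarrow> 'a set"
  assumes M1: "finite_measure M1" and M2: "finite_measure M2"
    and A: "\<And>i. A i \<in> sets M1" "\<And>i. A i \<in> sets M2"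
    and R: "\<And>i S. R i S \<in> sets M1" "\<And>i S. R i S \<in> sets M2"
    and R_UN: "\<And>i (I :: nat set) S. R i (\<Union>k\<in>I. S k) = (\<Union>k\<in>I. R i (S k))"
    and approx: "\<And>i. approximable_by M1 M2 F R (A i)"
  shows "approximable_by M1 M2 F R (\<Union>i. A i)"
  unfolding approximable_by_def
proof (intro allI impI)
  interpret M1: finite_measure M1 by (rule M1)
  interpret M2: finite_measure M2 by (rule M2)
  fix e :: real assume e: "0 < e"
  have "eventually (\<lambda>k. measure M1 (\<Union>i. A i) - e / 2 < measure M1 (\<Union>i<k. A i) \<and>
      measure M2 (\<Union>i. A i) - e / 2 < measure M2 (\<Union>i<k. A i)) sequentially"
    using e by (intro eventually_conj order_tendstoD(1)[OF M1.tendsto_measure_UN_lessThan]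
        order_tendstoD(1)[OF M2.tendsto_measure_UN_lessThan] A) auto
  then obtain N where N: "\<And>k. N \<le> k \<Longrightarrow> measure M1 (\<Union>i. A i) - measure M1 (\<Union>i<k. A i) < e / 2 \<and>
      measure M2 (\<Union>i. A i) - measure M2 (\<Union>i<k. A i) < e / 2"
    unfolding eventually_sequentially by force
  define k where "k = Suc N"
  have k: "0 < k" "N \<le> k" by (simp_all add: k_def)
  have "eventually (\<lambda>j. \<forall>i\<in>{..<k}. \<exists>S. measure M1 (sym_diff (A i) (R j S)) < e / (2 * real k) \<and>
      measure M2 (sym_diff (A i) (R j S)) < e / (2 * real k)) F"
    using approx e k(1) unfolding approximable_by_def by (intro eventually_ball_finite) auto
  then show "eventually (\<lambda>j. \<exists>S. measure M1 (sym_diff (\<Union>i. A i) (R j S)) < e \<and>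
      measure M2 (sym_diff (\<Union>i. A i) (R j S)) < e) F"
  proof eventually_elim
    case (elim j)
    then obtain S where S: "\<And>i. i < k \<Longrightarrow>
        measure M1 (sym_diff (A i) (R j (S i))) < e / (2 * real k) \<and>
        measure M2 (sym_diff (A i) (R j (S i))) < e / (2 * real k)"
      by (metis lessThan_iff)
    have "measure M1 (sym_diff (\<Union>i. A i) (\<Union>i<k. R j (S i))) < e"
      by (rule M1.measure_sym_diff_UN_less[OF A(1) R(1) k(1)]) (use N[OF k(2)] S in auto)
    moreover have "measure M2 (sym_diff (\<Union>i. A i) (\<Union>i<k. R j (S i))) < e"
      by (rule M2.measure_sym_diff_UN_less[OF A(2) R(2) k(1)]) (use N[OF k(2)] S in auto)
    ultimately show ?case unfolding R_UN[symmetric] by blast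
  qed
qed

lemma approximable_by_sigma_sets:
  fixes R :: "'i \<Rightarrow> 'c set \<Rightarrow> 'a set"
  assumes M1: "finite_measure M1" and M2: "finite_measure M2"
    and sets1: "sets M1 = sigma_sets \<Omega> G" and sets2: "sets M2 = sigma_sets \<Omega> G"
    and G: "G \<subseteq> Pow \<Omega>"
    and R_sets: "\<And>i S. R i S \<in> sigma_sets \<Omega> G"
    and R_Compl: "\<And>i S. R i (- S) = \<Omega> - R i S"
    and R_UN: "\<And>i (I :: nat set) S. R i (\<Union>k\<in>I. S k) = (\<Union>k\<in>I. R i (S k))"
    and basic: "\<And>a. a \<in> G \<Longrightarrow> approximable_by M1 M2 F R a"
    and W: "W \<in> sigma_sets \<Omega> G"
  shows "approximable_by M1 M2 F R W"
  using W
proof (induction rule: sigma_sets.induct)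
  case (Basic a)
  then show ?case by (rule basic)
next
  case Empty
  have "R i {} = {}" for i using R_UN[where i=i and I="{}"] by simp
  then show ?case unfolding approximable_by_def
    by (intro allI impI always_eventually exI[of _ "{}"]) simp
next
  case (Compl a)
  have "a \<subseteq> \<Omega>" using sigma_sets_into_sp[OF G Compl.hyps] .
  moreover have "R i S \<subseteq> \<Omega>" for i S using sigma_sets_into_sp[OF G R_sets] .
  ultimately have sym_diff_Compl: "sym_diff (\<Omega> - a) (R i (- S)) = sym_diff a (R i S)" for i S
    unfolding R_Compl by blast
  show ?case unfolding approximable_by_def
  proof (intro allI impI)
    fix e :: real assume "0 < e"
    with Compl.IH have "eventually (\<lambda>i. \<exists>S. measure M1 (sym_diff a (R i S)) < e \<and>
        measure M2 (sym_diff a (R i S)) < e) F"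
      unfolding approximable_by_def by blast
    then show "eventually (\<lambda>i. \<exists>S. measure M1 (sym_diff (\<Omega> - a) (R i S)) < e \<and>
        measure M2 (sym_diff (\<Omega> - a) (R i S)) < e) F"
      by eventually_elim (metis sym_diff_Compl)
  qed
next
  case (Union A)
  show ?case
    by (rule approximable_by_UN[OF M1 M2 _ _ _ _ R_UN Union.IH])
       (use Union.hyps R_sets sets1 sets2 in auto)
qed

lemma abs_sum_subset_le_half_sum_abs:
  fixes f :: "'a \<Rightarrow> real"
  assumes "finite C" "(\<Sum>x\<in>C. f x) = 0"
  shows "\<bar>\<Sum>x\<in>C \<inter> S. f x\<bar> \<le> (\<Sum>x\<in>C. \<bar>f x\<bar>) / 2"
proof -
  have "(\<Sum>x\<in>C. f x) = (\<Sum>x\<in>C \<inter> S. f x) + (\<Sum>x\<in>C - S. f x)"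
    "(\<Sum>x\<in>C. \<bar>f x\<bar>) = (\<Sum>x\<in>C \<inter> S. \<bar>f x\<bar>) + (\<Sum>x\<in>C - S. \<bar>f x\<bar>)"
    by (rule sum.Int_Diff[OF assms(1)])+
  moreover have "\<bar>\<Sum>x\<in>C \<inter> S. f x\<bar> \<le> (\<Sum>x\<in>C \<inter> S. \<bar>f x\<bar>)" "\<bar>\<Sum>x\<in>C - S. f x\<bar> \<le> (\<Sum>x\<in>C - S. \<bar>f x\<bar>)"
    by (rule sum_abs)+
  ultimately show ?thesis using assms(2) by linarith
qed

lemma sum_positive_part_eq_half_sum_abs:
  fixes f :: "'a \<Rightarrow> real"
  assumes "finite C" "(\<Sum>x\<in>C. f x) = 0"
  shows "(\<Sum>x\<in>C \<inter> {x. 0 < f x}. f x) = (\<Sum>x\<in>C. \<bar>f x\<bar>) / 2"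
proof -
  let ?P = "{x. 0 < f x}"
  have "(\<Sum>x\<in>C. f x) = (\<Sum>x\<in>C \<inter> ?P. f x) + (\<Sum>x\<in>C - ?P. f x)"
    "(\<Sum>x\<in>C. \<bar>f x\<bar>) = (\<Sum>x\<in>C \<inter> ?P. \<bar>f x\<bar>) + (\<Sum>x\<in>C - ?P. \<bar>f x\<bar>)"
    by (rule sum.Int_Diff[OF assms(1)])+
  moreover have "(\<Sum>x\<in>C \<inter> ?P. \<bar>f x\<bar>) = (\<Sum>x\<in>C \<inter> ?P. f x)"
    by (rule sum.cong) auto
  moreover have "(\<Sum>x\<in>C - ?P. \<bar>f x\<bar>) = - (\<Sum>x\<in>C - ?P. f x)"
    unfolding sum_negf[symmetric] by (rule sum.cong) auto
  ultimately show ?thesis using assms(2) by linarith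
qed

lemma abs_mult_diff_le:
  fixes a b c d :: real
  assumes "\<bar>a - c\<bar> \<le> e" "\<bar>b - d\<bar> \<le> e" "\<bar>b\<bar> \<le> 1" "\<bar>c\<bar> \<le> 1"
  shows "\<bar>a * b - c * d\<bar> \<le> 2 * e"
proof -
  have "\<bar>a * b - c * d\<bar> = \<bar>(a - c) * b + c * (b - d)\<bar>" by (simp add: algebra_simps)
  also have "\<dots> \<le> \<bar>a - c\<bar> * \<bar>b\<bar> + \<bar>c\<bar> * \<bar>b - d\<bar>" by (simp add: abs_mult[symmetric] abs_triangle_ineq)
  also have "\<dots> \<le> e * 1 + 1 * e" using assms by (intro add_mono mult_mono) auto
  finally show ?thesis by simp
qed

lemma square_mult_exp_le_tower:
  assumes "n \<le> X"
  shows "12 * n\<^sup>2 * 8 ^ X \<le> (2::nat) ^ (2 ^ (2 * X + 1) + 6)"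
proof -
  have five: "5 * X \<le> 2 ^ (2 * X + 1) + (2::nat)" for X
  proof (induction X)
    case (Suc X)
    have "(2::nat) \<le> 2 ^ (2 * X + 1)" using power_increasing[of 1 "2 * X + 1" "2::nat"] by simp
    moreover have "(2::nat) ^ (2 * Suc X + 1) = 4 * 2 ^ (2 * X + 1)" by (simp add: power_Suc)
    moreover have "5 * Suc X = 5 * X + 5" by simp
    ultimately show ?case using Suc by linarith
  qed simp
  have "n < 2 ^ n" by (rule less_exp)
  also have "(2::nat) ^ n \<le> 2 ^ X" using assms by (simp add: power_increasing)
  finally have "n\<^sup>2 \<le> (2 ^ X)\<^sup>2" by (simp add: power_mono)
  then have "12 * n\<^sup>2 * 8 ^ X \<le> 16 * (2 ^ X)\<^sup>2 * 8 ^ (X::nat)"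
    by (intro mult_right_mono mult_mono) simp_all
  also have "\<dots> = 2 ^ (5 * X + 4)"
  proof -
    have "(2 ^ X)\<^sup>2 * 8 ^ X = (2 * 2 * 8 :: nat) ^ X"
      by (simp only: power2_eq_square power_mult_distrib)
    then show ?thesis by (simp add: power_add power_mult)
  qed
  also have "\<dots> \<le> (2::nat) ^ (2 ^ (2 * X + 1) + 6)" using five[of X] by (intro power_increasing) auto
  finally show ?thesis .
qed

lemma C_tilde_ge:
  assumes "1 \<le> m" "1 \<le> l"
  shows "12 * real n ^ 2 * 8 ^ (l * n) \<le> C_tilde m l n / real m"
proof -
  have "(4::nat) \<le> 2 ^ (m * l + 1)"
    using power_increasing[of 2 "m * l + 1" "2::nat"] assms by (simp add: Suc_le_eq)
  then have "2 ^ (2 * (l * n) + 1) + 6 \<le> 2 ^ (2 * n * l + 1) + 2 ^ (m * l + 1) + (2::nat)"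
    by (simp add: ac_simps)
  then have "(2::real) ^ (2 ^ (2 * (l * n) + 1) + 6) \<le> 2 ^ (2 ^ (2 * n * l + 1) + 2 ^ (m * l + 1) + 2)"
    by (intro power_increasing) simp_all
  also have "\<dots> = C_tilde m l n / real m" using assms by (simp add: C_tilde_def)
  finally have "(2::real) ^ (2 ^ (2 * (l * n) + 1) + 6) \<le> C_tilde m l n / real m" .
  moreover have "12 * real n ^ 2 * 8 ^ (l * n) \<le> (2::real) ^ (2 ^ (2 * (l * n) + 1) + 6)"
  proof -
    have "real (12 * n\<^sup>2 * 8 ^ (l * n)) \<le> real ((2::nat) ^ (2 ^ (2 * (l * n) + 1) + 6))"
      using square_mult_exp_le_tower[of n "l * n"] assms(2) by (simp only: of_nat_le_iff) simp
    then show ?thesis by simp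
  qed
  ultimately show ?thesis by linarith
qed

lemma tau_tilde_mult_eta_ge:
  assumes "1 \<le> m" "1 \<le> l" "0 < e" "0 < d"
  shows "3 * real n ^ 2 * 2 ^ (l * n) / d \<le>
    real (nat \<lceil>C_tilde m l n / (real m * e\<^sup>2 * d)\<rceil>) * (e / (2 * 2 ^ (l * n)))\<^sup>2"
proof -
  have m: "0 < real m" using assms(1) by simp
  have "3 * real n ^ 2 * 2 ^ (l * n) / d = 12 * real n ^ 2 * 8 ^ (l * n) / (e\<^sup>2 * d) * (e / (2 * 2 ^ (l * n)))\<^sup>2"
  proof -
    have "(8::real) ^ (l * n) = 2 ^ (l * n) * (2 ^ (l * n))\<^sup>2"
      by (simp add: power2_eq_square flip: power_mult_distrib)
    then show ?thesis using assms(3,4) by (simp add: power_divide field_simps)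
  qed
  also have "\<dots> \<le> C_tilde m l n / (real m * e\<^sup>2 * d) * (e / (2 * 2 ^ (l * n)))\<^sup>2"
    using C_tilde_ge[OF assms(1,2), of n] assms(3,4) m
    by (intro mult_right_mono) (simp_all add: divide_right_mono field_simps)
  also have "\<dots> \<le> real (nat \<lceil>C_tilde m l n / (real m * e\<^sup>2 * d)\<rceil>) * (e / (2 * 2 ^ (l * n)))\<^sup>2"
    by (intro mult_right_mono real_nat_ceiling_ge) simp
  finally show ?thesis .
qed

lemma (in prob_space) prob_UN_le_card_mult:
  assumes "finite I" "\<And>i. i \<in> I \<Longrightarrow> F i \<in> events" "\<And>i. i \<in> I \<Longrightarrow> prob (F i) \<le> K"
    and "real (card I) \<le> N" "0 \<le> K"
  shows "prob (\<Union>i\<in>I. F i) \<le> N * K"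
proof -
  have "prob (\<Union>i\<in>I. F i) \<le> (\<Sum>i\<in>I. prob (F i))" using assms by (intro measure_UNION_le) auto
  also have "\<dots> \<le> real (card I) * K" using assms(3) by (rule sum_bounded_above)
  also have "\<dots> \<le> N * K" using assms(4,5) by (rule mult_right_mono)
  finally show ?thesis .
qed

section \<open>Beta-mixing coefficients of a path measure\<close>

locale path_measure = prob_space M for M :: "(nat \<Rightarrow> real) measure" +
  assumes sets_M: "sets M = sets Omega"
begin

lemma space_M [simp]: "space M = space Omega"
  using sets_M by (rule sets_eq_imp_space_eq)

lemma block_set_in_events: "block_set l c s \<in> events"
  using block_set_in_gen_alg[of c s UNIV l] sets_gen_alg_subset sets_M by auto

lemma gen_alg_in_events: "A \<in> sets (gen_alg T) \<Longrightarrow> A \<in> events"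
  using sets_gen_alg_subset sets_M by auto

lemma subalgebra_gen_alg: "subalgebra M (gen_alg T)"
  unfolding subalgebra_def using sets_gen_alg_subset sets_M by auto

lemma measurable_id_gen_alg: "(\<lambda>x. x) \<in> measurable M (gen_alg T)"
proof (rule measurableI)
  fix A assume "A \<in> sets (gen_alg T)"
  moreover from this have "(\<lambda>x. x) -` A \<inter> space M = A"
    using sets.sets_into_space by fastforce
  ultimately show "(\<lambda>x. x) -` A \<inter> space M \<in> sets M" using gen_alg_in_events by simp
qed simp

definition diag_law :: "nat set \<Rightarrow> nat set \<Rightarrow> ((nat \<Rightarrow> real) \<times> (nat \<Rightarrow> real)) measure" where
  "diag_law T1 T2 = distr M (gen_alg T1 \<Otimes>\<^sub>M gen_alg T2) (\<lambda>\<omega>. (\<omega>, \<omega>))"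

definition indep_law :: "nat set \<Rightarrow> nat set \<Rightarrow> ((nat \<Rightarrow> real) \<times> (nat \<Rightarrow> real)) measure" where
  "indep_law T1 T2 = restr_to_subalg M (gen_alg T1) \<Otimes>\<^sub>M restr_to_subalg M (gen_alg T2)"

lemma sets_diag_law [simp]: "sets (diag_law T1 T2) = sets (gen_alg T1 \<Otimes>\<^sub>M gen_alg T2)"
  by (simp add: diag_law_def)

lemma sets_indep_law [simp]: "sets (indep_law T1 T2) = sets (gen_alg T1 \<Otimes>\<^sub>M gen_alg T2)"
  unfolding indep_law_def
  by (intro sets_pair_measure_cong) (simp_all add: sets_restr_to_subalg subalgebra_gen_alg)

lemma space_diag_law [simp]: "space (diag_law T1 T2) = space Omega \<times> space Omega"
  using sets_eq_imp_space_eq[OF sets_diag_law] by (simp add: space_pair_measure)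

lemma space_indep_law [simp]: "space (indep_law T1 T2) = space Omega \<times> space Omega"
  using sets_eq_imp_space_eq[OF sets_indep_law] by (simp add: space_pair_measure)

lemma prob_space_diag_law: "prob_space (diag_law T1 T2)"
  unfolding diag_law_def
  by (intro prob_space_distr measurable_Pair measurable_id_gen_alg)

lemma prob_space_indep_law: "prob_space (indep_law T1 T2)"
  unfolding indep_law_def
  by (intro prob_space_pair prob_space_restr_to_subalg subalgebra_gen_alg prob_space_axioms)

lemma measure_diag_law_Times:
  assumes "E \<in> sets (gen_alg T1)" "F \<in> sets (gen_alg T2)"
  shows "measure (diag_law T1 T2) (E \<times> F) = prob (E \<inter> F)"
proof -
  have "measure (diag_law T1 T2) (E \<times> F) = prob ((\<lambda>\<omega>. (\<omega>, \<omega>)) -` (E \<times> F) \<inter> space M)"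
    unfolding diag_law_def using assms
    by (intro measure_distr measurable_Pair measurable_id_gen_alg) auto
  also have "(\<lambda>\<omega>. (\<omega>, \<omega>)) -` (E \<times> F) \<inter> space M = E \<inter> F"
    using assms sets.sets_into_space by fastforce
  finally show ?thesis .
qed

lemma measure_indep_law_Times:
  assumes "E \<in> sets (gen_alg T1)" "F \<in> sets (gen_alg T2)"
  shows "measure (indep_law T1 T2) (E \<times> F) = prob E * prob F"
proof -
  interpret R2: prob_space "restr_to_subalg M (gen_alg T2)"
    by (intro prob_space_restr_to_subalg subalgebra_gen_alg prob_space_axioms)
  show ?thesis
    using assms unfolding indep_law_def measure_def
    by (simp add: R2.emeasure_pair_measure_Times sets_restr_to_subalg[OF subalgebra_gen_alg]
        emeasure_restr_to_subalg[OF subalgebra_gen_alg] emeasure_eq_measure enn2real_mult)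
qed

lemma laws_le_of_subset_Times:
  assumes "X \<subseteq> E \<times> F" "X \<in> sets (gen_alg T1 \<Otimes>\<^sub>M gen_alg T2)"
    and "E \<in> sets (gen_alg T1)" "F \<in> sets (gen_alg T2)"
  shows "measure (diag_law T1 T2) X \<le> min (prob E) (prob F)"
    and "measure (indep_law T1 T2) X \<le> min (prob E) (prob F)"
proof -
  interpret D: prob_space "diag_law T1 T2" by (rule prob_space_diag_law)
  interpret P: prob_space "indep_law T1 T2" by (rule prob_space_indep_law)
  have EF: "E \<in> events" "F \<in> events" using assms(3,4) by (simp_all add: gen_alg_in_events)
  have "measure (diag_law T1 T2) X \<le> prob (E \<inter> F)"
    using assms by (subst measure_diag_law_Times[symmetric]) (auto intro!: D.finite_measure_mono)
  also have "\<dots> \<le> min (prob E) (prob F)" using EF by (auto intro!: finite_measure_mono)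
  finally show "measure (diag_law T1 T2) X \<le> min (prob E) (prob F)" .
  have "measure (indep_law T1 T2) X \<le> prob E * prob F"
    using assms by (subst measure_indep_law_Times[symmetric]) (auto intro!: P.finite_measure_mono)
  also have "\<dots> \<le> min (prob E) (prob F)"
    using prob_le_1[of E] prob_le_1[of F] by (simp add: mult_left_le mult_left_le_one_le)
  finally show "measure (indep_law T1 T2) X \<le> min (prob E) (prob F)" .
qed

lemma beta_sub_gen_alg:
  "beta_sub M (gen_alg T1) (gen_alg T2) = (SUP W\<in>sets (gen_alg T1 \<Otimes>\<^sub>M gen_alg T2).
     \<bar>measure (diag_law T1 T2) W - measure (indep_law T1 T2) W\<bar>)"
  unfolding beta_sub_def diag_law_def indep_law_def Let_def ..

lemma laws_dist_le_1: "\<bar>measure (diag_law T1 T2) W - measure (indep_law T1 T2) W\<bar> \<le> 1"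
proof -
  have "measure (diag_law T1 T2) W \<le> 1" "measure (indep_law T1 T2) W \<le> 1"
    using prob_space.prob_le_1[OF prob_space_diag_law] prob_space.prob_le_1[OF prob_space_indep_law] .
  moreover have "0 \<le> measure (diag_law T1 T2) W" "0 \<le> measure (indep_law T1 T2) W" by simp_all
  ultimately show ?thesis unfolding abs_le_iff by (intro conjI) linarith+
qed

lemma bdd_above_laws_dist: "bdd_above ((\<lambda>W. \<bar>measure (diag_law T1 T2) W - measure (indep_law T1 T2) W\<bar>) ` S)"
  by (intro bdd_aboveI[where M = 1]) (auto intro: laws_dist_le_1)

lemma laws_dist_le_beta_sub:
  assumes "W \<in> sets (gen_alg T1 \<Otimes>\<^sub>M gen_alg T2)"
  shows "\<bar>measure (diag_law T1 T2) W - measure (indep_law T1 T2) W\<bar> \<le> beta_sub M (gen_alg T1) (gen_alg T2)"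
  unfolding beta_sub_gen_alg by (rule cSUP_upper[OF assms bdd_above_laws_dist])

lemma beta_sub_le_1: "beta_sub M (gen_alg T1) (gen_alg T2) \<le> 1"
  unfolding beta_sub_gen_alg by (rule cSUP_least) (auto intro: laws_dist_le_1)

lemma bdd_above_beta_sub: "bdd_above ((\<lambda>j. beta_sub M (gen_alg {1..j}) (gen_alg {j + m..})) ` J)"
  by (intro bdd_aboveI[where M = 1]) (auto intro: beta_sub_le_1)

lemma beta_sub_le_beta_coef:
  "1 \<le> j \<Longrightarrow> beta_sub M (gen_alg {1..j}) (gen_alg {j + m..}) \<le> beta_coef M m"
  unfolding beta_coef_def by (rule cSUP_upper[OF _ bdd_above_beta_sub]) simp

lemma beta_coef_nonneg: "0 \<le> beta_coef M m"
  using beta_sub_le_beta_coef[of 1 m] laws_dist_le_beta_sub[of "{}" "{1..1}" "{1 + m..}"] by simp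

lemma beta_coef_mixing:
  assumes "1 \<le> j" "E \<in> sets (gen_alg {1..j})" "F \<in> sets (gen_alg {j + m..})"
  shows "\<bar>prob (E \<inter> F) - prob E * prob F\<bar> \<le> beta_coef M m"
  using laws_dist_le_beta_sub[of "E \<times> F" "{1..j}" "{j + m..}"] beta_sub_le_beta_coef[OF assms(1), of m]
  using assms by (simp add: measure_diag_law_Times measure_indep_law_Times)

lemma prob_shift_invariant:
  assumes "stationary M" and Q: "\<And>k. {\<omega>\<in>space Omega. Q (\<lambda>i. \<omega> (i + k))} \<in> events"
  shows "prob {\<omega>\<in>space Omega. Q (\<lambda>i. \<omega> (i + k))} = prob {\<omega>\<in>space Omega. Q \<omega>}"
proof (induction k)
  case (Suc k)
  have shift: "shift \<in> measurable M M"
    using measurable_shift by (simp add: measurable_cong_sets[OF sets_M sets_M])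
  have "prob {\<omega>\<in>space Omega. Q (\<lambda>i. \<omega> (i + k))} =
      measure (distr M M shift) {\<omega>\<in>space Omega. Q (\<lambda>i. \<omega> (i + k))}"
    using assms(1) unfolding stationary_def by simp
  also have "\<dots> = prob (shift -` {\<omega>\<in>space Omega. Q (\<lambda>i. \<omega> (i + k))} \<inter> space M)"
    using Q by (intro measure_distr shift) auto
  also have "shift -` {\<omega>\<in>space Omega. Q (\<lambda>i. \<omega> (i + k))} \<inter> space M =
      {\<omega>\<in>space Omega. Q (\<lambda>i. \<omega> (i + Suc k))}"
    by (auto simp: space_Omega shift_def)
  finally show ?case using Suc by simp
qed simp

lemma prob_block_pair_shift:
  assumes "stationary M" "1 \<le> s" "1 \<le> s'"
  shows "prob (block_set l A (s + k) \<inter> block_set l B (s' + k)) = prob (block_set l A s \<inter> block_set l B s')"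
proof -
  define Q where "Q \<psi> \<longleftrightarrow> (\<forall>r<length A. \<psi> (r + (s - 1)) \<in> dyadic_int l (A ! r)) \<and>
      (\<forall>r<length B. \<psi> (r + (s' - 1)) \<in> dyadic_int l (B ! r))" for \<psi> :: "nat \<Rightarrow> real"
  have blocks: "block_set l A (s + k) \<inter> block_set l B (s' + k) = {\<omega>\<in>space Omega. Q (\<lambda>i. \<omega> (i + k))}" for k
    using assms(2,3) by (auto simp: Q_def block_set_def block_in_def coord_def ac_simps)
  have "prob {\<omega>\<in>space Omega. Q (\<lambda>i. \<omega> (i + k))} = prob {\<omega>\<in>space Omega. Q \<omega>}"
    by (rule prob_shift_invariant[OF assms(1)])
       (simp flip: blocks add: sets.Int block_set_in_events)
  then show ?thesis using blocks[of k] blocks[of 0] by simp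
qed

lemma prob_block_shift:
  assumes "stationary M" "1 \<le> s"
  shows "prob (block_set l A (s + k)) = prob (block_set l A s)"
proof -
  have Nil: "block_set l A s1 \<inter> block_set l [] s2 = block_set l A s1" for s1 s2
    unfolding block_set_Nil by (auto simp: block_set_def)
  show ?thesis using prob_block_pair_shift[OF assms assms(2), of l A k "[]"] unfolding Nil .
qed

section \<open>The dyadic beta-statistic\<close>

definition cube_dep :: "nat \<Rightarrow> nat \<Rightarrow> nat \<Rightarrow> nat list \<times> nat list \<Rightarrow> real" where
  "cube_dep l j m AB = prob (block_set l (fst AB) 1 \<inter> block_set l (snd AB) (j + m))
     - prob (block_set l (fst AB) 1) * prob (block_set l (snd AB) (j + m))"

text \<open>The population version of the statistic maximised in \<open>\<beta>\<^sup>^\<close>.\<close>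

definition cube_beta :: "nat \<Rightarrow> nat \<Rightarrow> nat \<Rightarrow> nat \<Rightarrow> real" where
  "cube_beta l n j m = (\<Sum>AB\<in>cube_pairs l n m j. \<bar>cube_dep l j m AB\<bar>) / 2"

lemma laws_diff_cube_rect_set:
  shows "measure (diag_law {1..j} {j + m..}) (cube_rect_set j m l n S)
      - measure (indep_law {1..j} {j + m..}) (cube_rect_set j m l n S)
    = (\<Sum>AB\<in>S \<inter> cube_pairs l n m j. cube_dep l j m AB)"
proof -
  interpret D: prob_space "diag_law {1..j} {j + m..}" by (rule prob_space_diag_law)
  interpret P: prob_space "indep_law {1..j} {j + m..}" by (rule prob_space_indep_law)
  let ?R = "\<lambda>AB. block_set l (fst AB) 1 \<times> block_set l (snd AB) (j + m)"
  have fin: "finite (S \<inter> cube_pairs l n m j)" using finite_cube_pairs by blast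
  have disj: "disjoint_family_on ?R (S \<inter> cube_pairs l n m j)"
    by (rule disjoint_family_on_mono[OF _ disjoint_family_cube_rects]) auto
  have rects: "?R ` (S \<inter> cube_pairs l n m j) \<subseteq> sets (gen_alg {1..j} \<Otimes>\<^sub>M gen_alg {j + m..})"
    using cube_rect_in_sets by auto
  have "measure (diag_law {1..j} {j + m..}) (cube_rect_set j m l n S) =
      (\<Sum>AB\<in>S \<inter> cube_pairs l n m j. prob (block_set l (fst AB) 1 \<inter> block_set l (snd AB) (j + m)))"
    unfolding cube_rect_set_eq_UN using fin disj rects cube_rect_in_sets
    by (subst D.finite_measure_finite_Union) (auto intro!: sum.cong simp: measure_diag_law_Times)
  moreover have "measure (indep_law {1..j} {j + m..}) (cube_rect_set j m l n S) =
      (\<Sum>AB\<in>S \<inter> cube_pairs l n m j. prob (block_set l (fst AB) 1) * prob (block_set l (snd AB) (j + m)))"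
    unfolding cube_rect_set_eq_UN using fin disj rects cube_rect_in_sets
    by (subst P.finite_measure_finite_Union) (auto intro!: sum.cong simp: measure_indep_law_Times)
  ultimately show ?thesis by (simp add: cube_dep_def sum_subtractf)
qed

lemma sum_cube_dep_eq_0:
  shows "(\<Sum>AB\<in>cube_pairs l n m j. cube_dep l j m AB) = 0"
proof -
  have "cube_rect_set j m l n UNIV = space Omega \<times> space Omega" by (auto simp: cube_rect_set_def)
  moreover have "measure (diag_law T1 T2) (space Omega \<times> space Omega) = 1"
    "measure (indep_law T1 T2) (space Omega \<times> space Omega) = 1" for T1 T2
    using prob_space.prob_space[OF prob_space_diag_law] prob_space.prob_space[OF prob_space_indep_law]
    by simp_all
  ultimately show ?thesis using laws_diff_cube_rect_set[of j m l n UNIV] by simp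
qed

lemma laws_dist_cube_rect_set_le_cube_beta:
  shows "\<bar>measure (diag_law {1..j} {j + m..}) (cube_rect_set j m l n S)
      - measure (indep_law {1..j} {j + m..}) (cube_rect_set j m l n S)\<bar> \<le> cube_beta l n j m"
  unfolding laws_diff_cube_rect_set cube_beta_def Int_commute[of S]
  by (rule abs_sum_subset_le_half_sum_abs[OF finite_cube_pairs sum_cube_dep_eq_0])

lemma cube_beta_le_beta_coef:
  assumes "1 \<le> j"
  shows "cube_beta l n j m \<le> beta_coef M m"
proof -
  let ?S = "{AB. 0 < cube_dep l j m AB}"
  have "cube_beta l n j m = measure (diag_law {1..j} {j + m..}) (cube_rect_set j m l n ?S)
      - measure (indep_law {1..j} {j + m..}) (cube_rect_set j m l n ?S)"
    unfolding laws_diff_cube_rect_set cube_beta_def Int_commute[of ?S]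
    by (rule sum_positive_part_eq_half_sum_abs[OF finite_cube_pairs sum_cube_dep_eq_0, symmetric])
  also have "\<dots> \<le> beta_sub M (gen_alg {1..j}) (gen_alg {j + m..})"
    using laws_dist_le_beta_sub[OF cube_rect_set_in_sets] by (simp add: abs_le_iff)
  also have "\<dots> \<le> beta_coef M m" by (rule beta_sub_le_beta_coef[OF assms])
  finally show ?thesis .
qed

lemma prob_coord_in_shrinking_interval:
  "(\<lambda>l. prob {\<omega>\<in>space Omega. coord t \<omega> \<in> {a<..a + 1 / 2 ^ l}}) \<longlonglongrightarrow> 0"
proof -
  define E where "E l = {\<omega>\<in>space Omega. coord t \<omega> \<in> {a<..a + 1 / 2 ^ l}}" for l :: nat
  have "E l \<in> events" for l
    unfolding E_def using measurable_sets[OF measurable_coord] sets_M by auto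
  moreover have "decseq E"
    by (intro decseq_SucI) (auto simp: E_def divide_simps)
  moreover have "(\<Inter>l. E l) = {}"
  proof safe
    fix x assume x: "x \<in> (\<Inter>l. E l)"
    then have "a < coord t x" by (auto simp: E_def)
    then obtain l :: nat where "(1 / 2) ^ l < coord t x - a"
      using real_arch_pow_inv[of "coord t x - a" "1 / 2"] by auto
    moreover have "coord t x \<le> a + 1 / 2 ^ l" using x by (auto simp: E_def)
    ultimately show "x \<in> {}" by (simp add: power_one_over)
  qed
  ultimately show ?thesis
    using finite_Lim_measure_decseq[of E] unfolding E_def by auto
qed

lemma approximable_half_line_generator:
  assumes X: "X \<in> half_line_generators j m"
  shows "approximable_by (diag_law {1..j} {j + m..}) (indep_law {1..j} {j + m..})
    (sequentially \<times>\<^sub>F sequentially) (\<lambda>(l, n). cube_rect_set j m l n) X"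
  unfolding approximable_by_def
proof (intro allI impI)
  fix e :: real assume "0 < e"
  from X obtain t a where t: "t \<in> {1..j} \<and> X = {p\<in>space Omega \<times> space Omega. coord t (fst p) \<le> a}
      \<or> j + m \<le> t \<and> X = {p\<in>space Omega \<times> space Omega. coord t (snd p) \<le> a}"
    unfolding half_line_generators_def by blast
  define E where "E l = {\<omega>\<in>space Omega. coord t \<omega> \<in> {a<..a + 1 / 2 ^ l}}" for l
  from order_tendstoD(2)[OF prob_coord_in_shrinking_interval \<open>0 < e\<close>]
  obtain L where L: "\<And>l. L \<le> l \<Longrightarrow> prob (E l) < e"
    unfolding E_def eventually_sequentially by blast
  have "\<exists>S. measure (diag_law {1..j} {j + m..}) (sym_diff X (cube_rect_set j m l n S)) < e \<and>
      measure (indep_law {1..j} {j + m..}) (sym_diff X (cube_rect_set j m l n S)) < e"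
    if "L \<le> l" "t \<le> n" for l n
  proof -
    have sets: "sym_diff X (cube_rect_set j m l n S) \<in> sets (gen_alg {1..j} \<Otimes>\<^sub>M gen_alg {j + m..})" for S
      using X half_line_generators_subset cube_rect_set_in_sets by blast
    have E: "E l \<in> sets (gen_alg T)" if "t \<in> T" for T
      unfolding E_def using that by (intro coord_preimage_in_gen_alg) auto
    have top: "space Omega \<in> sets (gen_alg T)" for T using sets.top[of "gen_alg T"] by simp
    from t show ?thesis
    proof
      assume t: "t \<in> {1..j} \<and> X = {p\<in>space Omega \<times> space Omega. coord t (fst p) \<le> a}"
      define S where "S = {AB :: nat list \<times> nat list. real (fst AB ! (t - 1)) / 2 ^ l \<le> a}"
      have "sym_diff X (cube_rect_set j m l n S) \<subseteq> E l \<times> space Omega"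
        using t sym_diff_cube_rect_set_fst_half_line[of t j a m l n] by (simp add: E_def S_def)
      moreover have "E l \<in> sets (gen_alg {1..j})" using t E by blast
      ultimately have "measure (diag_law {1..j} {j + m..}) (sym_diff X (cube_rect_set j m l n S)) \<le> prob (E l)"
        "measure (indep_law {1..j} {j + m..}) (sym_diff X (cube_rect_set j m l n S)) \<le> prob (E l)"
        using laws_le_of_subset_Times[OF _ sets _ top] by (simp_all add: min.bounded_iff)
      then show ?thesis using L[OF \<open>L \<le> l\<close>] by (intro exI[of _ S] conjI) linarith+
    next
      assume t: "j + m \<le> t \<and> X = {p\<in>space Omega \<times> space Omega. coord t (snd p) \<le> a}"
      define S where "S = {AB :: nat list \<times> nat list. real (snd AB ! (t - (j + m))) / 2 ^ l \<le> a}"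
      have "sym_diff X (cube_rect_set j m l n S) \<subseteq> space Omega \<times> E l"
        using t \<open>t \<le> n\<close> sym_diff_cube_rect_set_snd_half_line[of j m t n a l] by (simp add: E_def S_def)
      moreover have "E l \<in> sets (gen_alg {j + m..})" using t E by simp
      ultimately have "measure (diag_law {1..j} {j + m..}) (sym_diff X (cube_rect_set j m l n S)) \<le> prob (E l)"
        "measure (indep_law {1..j} {j + m..}) (sym_diff X (cube_rect_set j m l n S)) \<le> prob (E l)"
        using laws_le_of_subset_Times[OF _ sets top] by (simp_all add: min.bounded_iff)
      then show ?thesis using L[OF \<open>L \<le> l\<close>] by (intro exI[of _ S] conjI) linarith+
    qed
  qed
  then show "eventually (\<lambda>i. \<exists>S.
      measure (diag_law {1..j} {j + m..}) (sym_diff X ((case i of (l, n) \<Rightarrow> cube_rect_set j m l n) S)) < e \<and>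
      measure (indep_law {1..j} {j + m..}) (sym_diff X ((case i of (l, n) \<Rightarrow> cube_rect_set j m l n) S)) < e)
      (sequentially \<times>\<^sub>F sequentially)"
    unfolding eventually_prod_sequentially by (intro exI[of _ "max L t"]) auto
qed

lemma approximable_gen_alg_pair:
  assumes "W \<in> sets (gen_alg {1..j} \<Otimes>\<^sub>M gen_alg {j + m..})"
  shows "approximable_by (diag_law {1..j} {j + m..}) (indep_law {1..j} {j + m..})
    (sequentially \<times>\<^sub>F sequentially) (\<lambda>(l, n). cube_rect_set j m l n) W"
proof (rule approximable_by_sigma_sets)
  show "finite_measure (diag_law {1..j} {j + m..})" "finite_measure (indep_law {1..j} {j + m..})"
    using prob_space_diag_law prob_space_indep_law by (auto intro: prob_space.finite_measure)
  show "sets (diag_law {1..j} {j + m..}) = sigma_sets (space Omega \<times> space Omega) (half_line_generators j m)"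
    "sets (indep_law {1..j} {j + m..}) = sigma_sets (space Omega \<times> space Omega) (half_line_generators j m)"
    "W \<in> sigma_sets (space Omega \<times> space Omega) (half_line_generators j m)"
    using assms unfolding sets_diag_law sets_indep_law sets_gen_alg_pair_eq by simp_all
  show "half_line_generators j m \<subseteq> Pow (space Omega \<times> space Omega)"
    by (auto simp: half_line_generators_def)
  show "(case i of (l, n) \<Rightarrow> cube_rect_set j m l n) S \<in>
      sigma_sets (space Omega \<times> space Omega) (half_line_generators j m)" for i S
    using cube_rect_set_in_sets unfolding sets_gen_alg_pair_eq by (simp split: prod.split)
  show "approximable_by (diag_law {1..j} {j + m..}) (indep_law {1..j} {j + m..})
      (sequentially \<times>\<^sub>F sequentially) (\<lambda>(l, n). cube_rect_set j m l n) X"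
    if "X \<in> half_line_generators j m" for X
    using that by (rule approximable_half_line_generator)
qed (auto simp: cube_rect_set_Compl cube_rect_set_UN split: prod.split)

lemma laws_dist_le_cube_beta_add:
  assumes W: "W \<in> sets (gen_alg {1..j} \<Otimes>\<^sub>M gen_alg {j + m..})"
  shows "\<bar>measure (diag_law {1..j} {j + m..}) W - measure (indep_law {1..j} {j + m..}) W\<bar>
    \<le> cube_beta l n j m + measure (diag_law {1..j} {j + m..}) (sym_diff W (cube_rect_set j m l n S))
      + measure (indep_law {1..j} {j + m..}) (sym_diff W (cube_rect_set j m l n S))"
proof -
  define R where "R = cube_rect_set j m l n S"
  interpret D: prob_space "diag_law {1..j} {j + m..}" by (rule prob_space_diag_law)
  interpret P: prob_space "indep_law {1..j} {j + m..}" by (rule prob_space_indep_law)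
  have "\<bar>measure (diag_law {1..j} {j + m..}) W - measure (diag_law {1..j} {j + m..}) R\<bar>
      \<le> measure (diag_law {1..j} {j + m..}) (sym_diff W R)"
    by (rule D.measure_sym_diff_le) (simp_all only: sets_diag_law W R_def cube_rect_set_in_sets)
  moreover have "\<bar>measure (indep_law {1..j} {j + m..}) W - measure (indep_law {1..j} {j + m..}) R\<bar>
      \<le> measure (indep_law {1..j} {j + m..}) (sym_diff W R)"
    by (rule P.measure_sym_diff_le) (simp_all only: sets_indep_law W R_def cube_rect_set_in_sets)
  moreover have "\<bar>measure (diag_law {1..j} {j + m..}) R - measure (indep_law {1..j} {j + m..}) R\<bar>
      \<le> cube_beta l n j m"
    unfolding R_def by (rule laws_dist_cube_rect_set_le_cube_beta)
  ultimately show ?thesis unfolding R_def by linarith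
qed

lemma eventually_cube_beta_gt:
  assumes "x < beta_coef M m"
  shows "\<exists>j\<ge>1. \<exists>y>x. eventually (\<lambda>(l, n). y < cube_beta l n j m) (sequentially \<times>\<^sub>F sequentially)"
proof -
  obtain j where j: "1 \<le> j" "x < beta_sub M (gen_alg {1..j}) (gen_alg {j + m..})"
    using assms bdd_above_beta_sub[of m "{1..}"] unfolding beta_coef_def
    by (subst (asm) less_cSUP_iff) auto
  then obtain W where W: "W \<in> sets (gen_alg {1..j} \<Otimes>\<^sub>M gen_alg {j + m..})"
    and x_less: "x < \<bar>measure (diag_law {1..j} {j + m..}) W - measure (indep_law {1..j} {j + m..}) W\<bar>"
    unfolding beta_sub_gen_alg by (subst (asm) less_cSUP_iff) (auto intro: bdd_above_laws_dist)
  define \<eta> where "\<eta> = \<bar>measure (diag_law {1..j} {j + m..}) W - measure (indep_law {1..j} {j + m..}) W\<bar> - x"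
  have "0 < \<eta>" using x_less by (simp add: \<eta>_def)
  then have "eventually (\<lambda>(l, n). \<exists>S.
      measure (diag_law {1..j} {j + m..}) (sym_diff W (cube_rect_set j m l n S)) < \<eta> / 4 \<and>
      measure (indep_law {1..j} {j + m..}) (sym_diff W (cube_rect_set j m l n S)) < \<eta> / 4)
      (sequentially \<times>\<^sub>F sequentially)"
    using approximable_gen_alg_pair[OF W] unfolding approximable_by_def case_prod_unfold
    by (meson zero_less_divide_iff zero_less_numeral)
  then have "eventually (\<lambda>(l, n). x + \<eta> / 4 < cube_beta l n j m) (sequentially \<times>\<^sub>F sequentially)"
  proof (rule eventually_mono, clarify)
    fix l n S
    assume "measure (diag_law {1..j} {j + m..}) (sym_diff W (cube_rect_set j m l n S)) < \<eta> / 4"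
      "measure (indep_law {1..j} {j + m..}) (sym_diff W (cube_rect_set j m l n S)) < \<eta> / 4"
    moreover have "\<bar>measure (diag_law {1..j} {j + m..}) W - measure (indep_law {1..j} {j + m..}) W\<bar> = x + \<eta>"
      by (simp add: \<eta>_def)
    ultimately show "x + \<eta> / 4 < cube_beta l n j m"
      using laws_dist_le_cube_beta_add[OF W, of l n S] \<open>0 < \<eta>\<close> by linarith
  qed
  then show ?thesis using j(1) \<open>0 < \<eta>\<close> by (intro exI[of _ j] conjI exI[of _ "x + \<eta> / 4"]) auto
qed

section \<open>Consistency of the estimator\<close>

lemma frequency_deviation_in_events:
  assumes "\<And>i. E i \<in> events"
  shows "{x\<in>space M. \<eta> \<le> \<bar>frequency \<tau> E x - p\<bar>} \<in> events"
proof -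
  have "(\<lambda>x. frequency \<tau> E x) \<in> borel_measurable M"
    using assms unfolding frequency_def by measurable
  then show ?thesis by measurable
qed

definition beta_sum :: real where
  "beta_sum = (\<Sum>m. beta_coef M (Suc m))"

text \<open>Blocks of length \<open>L\<close> that are \<open>d\<close> blocks apart are separated by a gap of
  \<open>(d - 1) L + 1\<close> coordinates, so the covariances are summable against \<open>beta_sum\<close>.\<close>

lemma prob_block_frequency_deviation_le:
  assumes summable: "summable (\<lambda>m. beta_coef M (Suc m))" and L: "1 \<le> L"
    and past: "\<And>i. E i \<in> sets (gen_alg {1..(i + 1) * L})"
    and future: "\<And>i. E i \<in> sets (gen_alg {i * L + 1..})"
    and p: "\<And>i. prob (E i) = p" and \<tau>: "0 < \<tau>" and \<eta>: "0 < \<eta>"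
  shows "prob {x\<in>space M. \<eta> \<le> \<bar>frequency \<tau> E x - p\<bar>} \<le> (1 + 2 * beta_sum) / (real \<tau> * \<eta>\<^sup>2)"
proof (rule prob_frequency_deviation_le[where c = "\<lambda>d. beta_coef M ((d - 1) * L + 1)"])
  show "E i \<in> events" for i using past gen_alg_in_events by blast
  show "prob (E i) = p" for i by (rule p)
  show "0 \<le> beta_coef M ((d - 1) * L + 1)" for d by (rule beta_coef_nonneg)
  show "(\<Sum>d=1..N. beta_coef M ((d - 1) * L + 1)) \<le> beta_sum" for N
  proof -
    have "inj_on (\<lambda>d. (d - 1) * L) {1..N}" using L by (auto simp: inj_on_def)
    then have "(\<Sum>d=1..N. beta_coef M ((d - 1) * L + 1)) = (\<Sum>k\<in>(\<lambda>d. (d - 1) * L) ` {1..N}. beta_coef M (Suc k))"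
      by (simp add: sum.reindex)
    also have "\<dots> \<le> beta_sum"
      unfolding beta_sum_def by (rule sum_le_suminf[OF summable]) (auto simp: beta_coef_nonneg)
    finally show ?thesis .
  qed
  show "\<bar>prob (E i \<inter> E k) - p\<^sup>2\<bar> \<le> beta_coef M ((k - i - 1) * L + 1)" if "i < k" for i k
  proof -
    have "k = (i + 1) + (k - i - 1)" using that by simp
    then have "k * L + 1 = (i + 1) * L + ((k - i - 1) * L + 1)"
      by (metis add.assoc add_mult_distrib)
    then have "E k \<in> sets (gen_alg {(i + 1) * L + ((k - i - 1) * L + 1)..})" using future[of k] by simp
    moreover have "1 \<le> (i + 1) * L" using L by simp
    ultimately have "\<bar>prob (E i \<inter> E k) - prob (E i) * prob (E k)\<bar> \<le> beta_coef M ((k - i - 1) * L + 1)"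
      using beta_coef_mixing past[of i] by blast
    then show ?thesis using p by (simp add: power2_eq_square)
  qed
qed (use \<tau> \<eta> in auto)

lemma prob_emp_mu_deviation_le:
  assumes "summable (\<lambda>m. beta_coef M (Suc m))" "stationary M"
    and "1 \<le> length A" "0 < \<tau>" "0 < \<eta>"
  shows "prob {x\<in>space M. \<eta> \<le> \<bar>emp_mu l \<tau> x A - prob (block_set l A 1)\<bar>}
    \<le> (1 + 2 * beta_sum) / (real \<tau> * \<eta>\<^sup>2)"
proof -
  have "prob {x\<in>space M. \<eta> \<le> \<bar>frequency \<tau> (\<lambda>i. block_set l A (i * length A + 1)) x - prob (block_set l A 1)\<bar>}
      \<le> (1 + 2 * beta_sum) / (real \<tau> * \<eta>\<^sup>2)"
  proof (rule prob_block_frequency_deviation_le[OF assms(1,3) _ _ _ assms(4,5)])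
    show "block_set l A (i * length A + 1) \<in> sets (gen_alg {1..(i + 1) * length A})"
      "block_set l A (i * length A + 1) \<in> sets (gen_alg {i * length A + 1..})" for i
      by (auto intro!: block_set_in_gen_alg)
    show "prob (block_set l A (i * length A + 1)) = prob (block_set l A 1)" for i
      using prob_block_shift[OF assms(2) order_refl, of l A "i * length A"] by (simp add: add.commute)
  qed
  moreover have "{x\<in>space M. \<eta> \<le> \<bar>emp_mu l \<tau> x A - prob (block_set l A 1)\<bar>} =
      {x\<in>space M. \<eta> \<le> \<bar>frequency \<tau> (\<lambda>i. block_set l A (i * length A + 1)) x - prob (block_set l A 1)\<bar>}"
    by (auto simp: emp_mu_eq_frequency)
  ultimately show ?thesis by simp
qed

lemma prob_emp_gamma_deviation_le:
  assumes "summable (\<lambda>m. beta_coef M (Suc m))" "stationary M"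
    and AB: "(A, B) \<in> cube_pairs l n m j" and jmn: "1 \<le> j" "j + m \<le> n" "1 \<le> m"
    and "0 < \<tau>" "0 < \<eta>"
  shows "prob {x\<in>space M. \<eta> \<le> \<bar>emp_gamma l \<tau> n m j x A B - prob (block_set l A 1 \<inter> block_set l B (j + m))\<bar>}
    \<le> (1 + 2 * beta_sum) / (real \<tau> * \<eta>\<^sup>2)"
proof -
  have len: "length A = j" "length B = n - m - j + 1"
    using AB by (auto simp: cube_pairs_def dyadic_cubes_def)
  have "prob {x\<in>space M. \<eta> \<le> \<bar>frequency \<tau> (\<lambda>i. block_set l A (i * n + 1) \<inter> block_set l B (i * n + j + m)) x
      - prob (block_set l A 1 \<inter> block_set l B (j + m))\<bar>} \<le> (1 + 2 * beta_sum) / (real \<tau> * \<eta>\<^sup>2)"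
  proof (rule prob_block_frequency_deviation_le[OF assms(1) _ _ _ _ assms(7,8)])
    show "1 \<le> n" using jmn by simp
    show "block_set l A (i * n + 1) \<inter> block_set l B (i * n + j + m) \<in> sets (gen_alg {1..(i + 1) * n})"
      "block_set l A (i * n + 1) \<inter> block_set l B (i * n + j + m) \<in> sets (gen_alg {i * n + 1..})" for i
      using len jmn by (auto intro!: sets.Int block_set_in_gen_alg)
    show "prob (block_set l A (i * n + 1) \<inter> block_set l B (i * n + j + m)) =
        prob (block_set l A 1 \<inter> block_set l B (j + m))" for i
      using prob_block_pair_shift[OF assms(2), of 1 "j + m" l A "i * n" B] jmn by (simp add: ac_simps)
  qed
  moreover have "{x\<in>space M. \<eta> \<le> \<bar>emp_gamma l \<tau> n m j x A B - prob (block_set l A 1 \<inter> block_set l B (j + m))\<bar>} =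
      {x\<in>space M. \<eta> \<le> \<bar>frequency \<tau> (\<lambda>i. block_set l A (i * n + 1) \<inter> block_set l B (i * n + j + m)) x
        - prob (block_set l A 1 \<inter> block_set l B (j + m))\<bar>}"
    by (auto simp: emp_gamma_eq_frequency)
  ultimately show ?thesis by simp
qed

definition pair_deviation_event ::
    "nat \<Rightarrow> nat \<Rightarrow> nat \<Rightarrow> nat \<Rightarrow> nat \<Rightarrow> real \<Rightarrow> nat list \<times> nat list \<Rightarrow> (nat \<Rightarrow> real) set" where
  "pair_deviation_event l \<tau> n m j \<eta> AB =
     {x\<in>space M. \<eta> \<le> \<bar>emp_mu l \<tau> x (fst AB) - prob (block_set l (fst AB) 1)\<bar>} \<union>
     {x\<in>space M. \<eta> \<le> \<bar>emp_mu l \<tau> x (snd AB) - prob (block_set l (snd AB) 1)\<bar>} \<union>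
     {x\<in>space M. \<eta> \<le> \<bar>emp_gamma l \<tau> n m j x (fst AB) (snd AB)
        - prob (block_set l (fst AB) 1 \<inter> block_set l (snd AB) (j + m))\<bar>}"

lemma emp_mu_deviation_in_events:
  "{x\<in>space M. \<eta> \<le> \<bar>emp_mu l \<tau> x A - p\<bar>} \<in> events"
proof -
  have "{x\<in>space M. \<eta> \<le> \<bar>emp_mu l \<tau> x A - p\<bar>} =
      {x\<in>space M. \<eta> \<le> \<bar>frequency \<tau> (\<lambda>i. block_set l A (i * length A + 1)) x - p\<bar>}"
    by (auto simp: emp_mu_eq_frequency)
  then show ?thesis by (simp only:) (intro frequency_deviation_in_events block_set_in_events)
qed

lemma emp_gamma_deviation_in_events:
  "{x\<in>space M. \<eta> \<le> \<bar>emp_gamma l \<tau> n m j x A B - p\<bar>} \<in> events"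
proof -
  have "{x\<in>space M. \<eta> \<le> \<bar>emp_gamma l \<tau> n m j x A B - p\<bar>} =
      {x\<in>space M. \<eta> \<le> \<bar>frequency \<tau> (\<lambda>i. block_set l A (i * n + 1) \<inter> block_set l B (i * n + j + m)) x - p\<bar>}"
    by (auto simp: emp_gamma_eq_frequency)
  then show ?thesis by (simp only:) (intro frequency_deviation_in_events sets.Int block_set_in_events)
qed

lemma pair_deviation_event_in_events: "pair_deviation_event l \<tau> n m j \<eta> AB \<in> events"
  unfolding pair_deviation_event_def
  by (intro sets.Un emp_mu_deviation_in_events emp_gamma_deviation_in_events)

lemma prob_pair_deviation_event_le:
  assumes "summable (\<lambda>m. beta_coef M (Suc m))" "stationary M"
    and AB: "AB \<in> cube_pairs l n m j" and "1 \<le> j" "j + m \<le> n" "1 \<le> m" "0 < \<tau>" "0 < \<eta>"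
  shows "prob (pair_deviation_event l \<tau> n m j \<eta> AB) \<le> 3 * ((1 + 2 * beta_sum) / (real \<tau> * \<eta>\<^sup>2))"
proof -
  have len: "1 \<le> length (fst AB)" "1 \<le> length (snd AB)"
    using AB assms(4-6) by (auto simp: cube_pairs_def dyadic_cubes_def)
  obtain A B where AB_eq: "AB = (A, B)" by (cases AB)
  define K where "K = (1 + 2 * beta_sum) / (real \<tau> * \<eta>\<^sup>2)"
  let ?XA = "{x\<in>space M. \<eta> \<le> \<bar>emp_mu l \<tau> x A - prob (block_set l A 1)\<bar>}"
  let ?XB = "{x\<in>space M. \<eta> \<le> \<bar>emp_mu l \<tau> x B - prob (block_set l B 1)\<bar>}"
  let ?XG = "{x\<in>space M. \<eta> \<le> \<bar>emp_gamma l \<tau> n m j x A B - prob (block_set l A 1 \<inter> block_set l B (j + m))\<bar>}"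
  have "prob (pair_deviation_event l \<tau> n m j \<eta> AB) \<le> prob (?XA \<union> ?XB) + prob ?XG"
    unfolding pair_deviation_event_def AB_eq fst_conv snd_conv
    by (intro measure_Un_le sets.Un emp_mu_deviation_in_events emp_gamma_deviation_in_events)
  moreover have "prob (?XA \<union> ?XB) \<le> prob ?XA + prob ?XB"
    by (intro measure_Un_le emp_mu_deviation_in_events)
  moreover have "prob ?XA \<le> K" "prob ?XB \<le> K"
    using prob_emp_mu_deviation_le[OF assms(1,2) len(1) assms(7,8)]
      prob_emp_mu_deviation_le[OF assms(1,2) len(2) assms(7,8)] by (simp_all add: AB_eq K_def)
  moreover have "prob ?XG \<le> K"
    using prob_emp_gamma_deviation_le[OF assms(1,2) _ assms(4-8)] AB by (simp add: AB_eq K_def)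
  ultimately show ?thesis unfolding K_def[symmetric] by linarith
qed

lemma beta_hat_summand_close:
  assumes "stationary M" "1 \<le> j" and x: "x \<in> space M"
    and good: "x \<notin> pair_deviation_event l \<tau> n m j \<eta> (A, B)"
  shows "\<bar>\<bar>emp_gamma l \<tau> n m j x A B - emp_mu l \<tau> x A * emp_mu l \<tau> x B\<bar> - \<bar>cube_dep l j m (A, B)\<bar>\<bar>
    \<le> 3 * \<eta>"
proof -
  have close: "\<bar>emp_mu l \<tau> x A - prob (block_set l A 1)\<bar> \<le> \<eta>"
    "\<bar>emp_mu l \<tau> x B - prob (block_set l B 1)\<bar> \<le> \<eta>"
    "\<bar>emp_gamma l \<tau> n m j x A B - prob (block_set l A 1 \<inter> block_set l B (j + m))\<bar> \<le> \<eta>"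
    using good x unfolding pair_deviation_event_def by auto
  have "prob (block_set l B (j + m)) = prob (block_set l B 1)"
    using prob_block_shift[OF assms(1) order_refl, of l B "j + m - 1"] assms(2) by simp
  then have dep: "cube_dep l j m (A, B) = prob (block_set l A 1 \<inter> block_set l B (j + m))
      - prob (block_set l A 1) * prob (block_set l B 1)"
    by (simp add: cube_dep_def)
  have prod: "\<bar>emp_mu l \<tau> x A * emp_mu l \<tau> x B - prob (block_set l A 1) * prob (block_set l B 1)\<bar> \<le> 2 * \<eta>"
  proof (rule abs_mult_diff_le[OF close(1,2)])
    show "\<bar>emp_mu l \<tau> x B\<bar> \<le> 1"
      using x by (simp add: emp_mu_eq_frequency abs_of_nonneg frequency_nonneg frequency_le_1)
  qed simp
  have "\<bar>\<bar>emp_gamma l \<tau> n m j x A B - emp_mu l \<tau> x A * emp_mu l \<tau> x B\<bar> - \<bar>cube_dep l j m (A, B)\<bar>\<bar>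
      \<le> \<bar>(emp_gamma l \<tau> n m j x A B - emp_mu l \<tau> x A * emp_mu l \<tau> x B) - cube_dep l j m (A, B)\<bar>"
    by (rule abs_triangle_ineq3)
  also have "\<dots> = \<bar>(emp_gamma l \<tau> n m j x A B - prob (block_set l A 1 \<inter> block_set l B (j + m)))
      - (emp_mu l \<tau> x A * emp_mu l \<tau> x B - prob (block_set l A 1) * prob (block_set l B 1))\<bar>"
    unfolding dep by (simp add: algebra_simps)
  also have "\<dots> \<le> \<eta> + 2 * \<eta>"
    by (rule order_trans[OF abs_triangle_ineq4 add_mono[OF close(3) prod]])
  finally show ?thesis by simp
qed

lemma beta_hat_term_close:
  assumes "stationary M" and jmn: "1 \<le> j" "j + m \<le> n" "1 \<le> m" and x: "x \<in> space M"
    and good: "\<And>AB. AB \<in> cube_pairs l n m j \<Longrightarrow> x \<notin> pair_deviation_event l \<tau> n m j \<eta> AB"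
    and "0 \<le> \<eta>"
  shows "\<bar>beta_hat_term l \<tau> n x m j - cube_beta l n j m\<bar> \<le> 3 / 2 * 2 ^ (l * n) * \<eta>"
proof -
  let ?C = "cube_pairs l n m j"
  define g where "g AB = \<bar>emp_gamma l \<tau> n m j x (fst AB) (snd AB)
      - emp_mu l \<tau> x (fst AB) * emp_mu l \<tau> x (snd AB)\<bar>" for AB
  have beta_hat_term_eq: "beta_hat_term l \<tau> n x m j = (\<Sum>AB\<in>?C. g AB) / 2"
    unfolding beta_hat_term_def g_def cube_pairs_def by (simp add: sum.cartesian_product case_prod_beta)
  have "\<bar>(\<Sum>AB\<in>?C. g AB) - (\<Sum>AB\<in>?C. \<bar>cube_dep l j m AB\<bar>)\<bar> \<le> (\<Sum>AB\<in>?C. \<bar>g AB - \<bar>cube_dep l j m AB\<bar>\<bar>)"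
    unfolding sum_subtractf[symmetric] by (rule sum_abs)
  also have "\<dots> \<le> real (card ?C) * (3 * \<eta>)"
    using beta_hat_summand_close[OF assms(1) jmn(1) x good] by (intro sum_bounded_above) (auto simp: g_def)
  also have "\<dots> \<le> 2 ^ (l * n) * (3 * \<eta>)"
    using card_cube_pairs_le[OF jmn(2,3)] \<open>0 \<le> \<eta>\<close> by (intro mult_right_mono) auto
  finally show ?thesis unfolding beta_hat_term_eq cube_beta_def by (simp add: field_simps)
qed

definition estimate_bad_event :: "nat \<Rightarrow> nat \<Rightarrow> nat \<Rightarrow> (nat \<Rightarrow> nat) \<Rightarrow> real \<Rightarrow> (nat \<Rightarrow> real) set" where
  "estimate_bad_event l n Mt \<tau> \<eta> =
     (\<Union>m\<in>{1..Mt}. \<Union>j\<in>{1..n - m}. \<Union>AB\<in>cube_pairs l n m j. pair_deviation_event l (\<tau> m) n m j \<eta> AB)"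

lemma estimate_bad_event_in_events: "estimate_bad_event l n Mt \<tau> \<eta> \<in> events"
  unfolding estimate_bad_event_def
  by (intro sets.finite_UN finite_atLeastAtMost finite_cube_pairs pair_deviation_event_in_events)

lemma prob_estimate_bad_event_le:
  assumes "summable (\<lambda>m. beta_coef M (Suc m))" "stationary M" "Mt < n"
    and \<tau>: "\<And>m. m \<in> {1..Mt} \<Longrightarrow> 0 < \<tau> m" and "0 < \<eta>"
    and K: "\<And>m. m \<in> {1..Mt} \<Longrightarrow> 3 * ((1 + 2 * beta_sum) / (real (\<tau> m) * \<eta>\<^sup>2)) \<le> K" and "0 \<le> K"
  shows "prob (estimate_bad_event l n Mt \<tau> \<eta>) \<le> real n * (real n * (2 ^ (l * n) * K))"
  unfolding estimate_bad_event_def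
proof (rule prob_UN_le_card_mult)
  fix m assume m: "m \<in> {1..Mt}"
  show "(\<Union>j\<in>{1..n - m}. \<Union>AB\<in>cube_pairs l n m j. pair_deviation_event l (\<tau> m) n m j \<eta> AB) \<in> events"
    by (intro sets.finite_UN finite_atLeastAtMost finite_cube_pairs pair_deviation_event_in_events)
  show "prob (\<Union>j\<in>{1..n - m}. \<Union>AB\<in>cube_pairs l n m j. pair_deviation_event l (\<tau> m) n m j \<eta> AB)
      \<le> real n * (2 ^ (l * n) * K)"
  proof (rule prob_UN_le_card_mult)
    fix j assume j: "j \<in> {1..n - m}"
    then have jmn: "1 \<le> j" "j + m \<le> n" "1 \<le> m" using m by auto
    show "(\<Union>AB\<in>cube_pairs l n m j. pair_deviation_event l (\<tau> m) n m j \<eta> AB) \<in> events"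
      by (intro sets.finite_UN finite_cube_pairs pair_deviation_event_in_events)
    show "prob (\<Union>AB\<in>cube_pairs l n m j. pair_deviation_event l (\<tau> m) n m j \<eta> AB) \<le> 2 ^ (l * n) * K"
    proof (rule prob_UN_le_card_mult[OF finite_cube_pairs pair_deviation_event_in_events _
          card_cube_pairs_le[OF jmn(2,3)] \<open>0 \<le> K\<close>])
      fix AB assume "AB \<in> cube_pairs l n m j"
      from prob_pair_deviation_event_le[OF assms(1,2) this jmn \<tau>[OF m] \<open>0 < \<eta>\<close>] K[OF m]
      show "prob (pair_deviation_event l (\<tau> m) n m j \<eta> AB) \<le> K" by linarith
    qed
  qed (use \<open>0 \<le> K\<close> in auto)
qed (use assms(3) \<open>0 \<le> K\<close> in auto)

lemma beta_sum_nonneg: "summable (\<lambda>m. beta_coef M (Suc m)) \<Longrightarrow> 0 \<le> beta_sum"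
  unfolding beta_sum_def by (rule suminf_nonneg) (simp_all add: beta_coef_nonneg)

lemma prob_estimate_bad_event_tilde_le:
  assumes summable: "summable (\<lambda>m. beta_coef M (Suc m))" and "stationary M"
    and "1 \<le> l" "Mt < n" "0 < e" "0 < d"
  shows "prob (estimate_bad_event l n Mt (\<lambda>m. nat \<lceil>C_tilde m l n / (real m * e\<^sup>2 * d)\<rceil>)
    (e / (2 * 2 ^ (l * n)))) \<le> (1 + 2 * beta_sum) * d"
proof -
  define \<tau> where "\<tau> m = nat \<lceil>C_tilde m l n / (real m * e\<^sup>2 * d)\<rceil>" for m
  define \<eta> where "\<eta> = e / (2 * 2 ^ (l * n))"
  define N where "N = real n ^ 2 * 2 ^ (l * n)"
  define K where "K = (1 + 2 * beta_sum) * d / N"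
  have N: "0 < N" using assms(4) by (simp add: N_def)
  have pos: "0 < 3 * N / d" using N assms(6) by simp
  have \<tau>\<eta>: "3 * N / d \<le> real (\<tau> m) * \<eta>\<^sup>2" if "m \<in> {1..Mt}" for m
    using tau_tilde_mult_eta_ge[of m l e d n] that assms(3,5,6)
    by (simp add: \<tau>_def \<eta>_def N_def mult.assoc)
  have \<tau>: "0 < \<tau> m" if "m \<in> {1..Mt}" for m
    using pos \<tau>\<eta>[OF that] by (auto intro: ccontr)
  have "3 * ((1 + 2 * beta_sum) / (real (\<tau> m) * \<eta>\<^sup>2)) \<le> K" if "m \<in> {1..Mt}" for m
  proof -
    have "(1 + 2 * beta_sum) / (real (\<tau> m) * \<eta>\<^sup>2) \<le> (1 + 2 * beta_sum) / (3 * N / d)"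
      using beta_sum_nonneg[OF summable] mult_pos_pos[OF order.strict_trans2[OF pos \<tau>\<eta>[OF that]] pos]
      by (intro divide_left_mono \<tau>\<eta>[OF that]) auto
    also have "\<dots> = K / 3" using N assms(6) by (simp add: K_def field_simps)
    finally show ?thesis by simp
  qed
  then have "prob (estimate_bad_event l n Mt \<tau> \<eta>) \<le> real n * (real n * (2 ^ (l * n) * K))"
    using beta_sum_nonneg[OF summable] assms(6) N
    by (intro prob_estimate_bad_event_le summable assms(2,4) \<tau>) (auto simp: K_def \<eta>_def assms(5))
  also have "\<dots> = N * K" by (simp add: N_def power2_eq_square)
  also have "\<dots> = (1 + 2 * beta_sum) * d" using N by (simp add: K_def)
  finally show ?thesis unfolding \<tau>_def \<eta>_def .
qed

lemma AE_eventually_beta_hat_term_close: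
  assumes summable: "summable (\<lambda>m. beta_coef M (Suc m))" and "stationary M"
    and ls: "\<And>t. ls t > 0" and ns_Ms: "\<And>t. ns t > Ms t"
    and dl: "\<And>t. dl t > 0" "dl sums \<delta>" and eps: "\<And>t. eps t > 0"
  shows "AE x in M. eventually (\<lambda>t. \<forall>m\<in>{1..Ms t}. \<forall>j\<in>{1..ns t - m}.
    \<bar>beta_hat_term (ls t) (tau_tilde ls ns eps dl t m) (ns t) x m j - cube_beta (ls t) (ns t) j m\<bar>
      \<le> 3 / 4 * eps t) sequentially"
proof -
  define \<eta> where "\<eta> t = eps t / (2 * 2 ^ (ls t * ns t))" for t
  define Bad where "Bad t = estimate_bad_event (ls t) (ns t) (Ms t) (tau_tilde ls ns eps dl t) (\<eta> t)" for t
  have prob_Bad: "prob (Bad t) \<le> (1 + 2 * beta_sum) * dl t" for t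
    unfolding Bad_def \<eta>_def tau_tilde_def
    using prob_estimate_bad_event_tilde_le[OF summable assms(2)] ls ns_Ms dl(1) eps
    by (simp add: Suc_le_eq)
  have "summable (\<lambda>t. prob (Bad t))"
  proof (rule summable_comparison_test')
    show "summable (\<lambda>t. (1 + 2 * beta_sum) * dl t)" using sums_summable[OF dl(2)] by (rule summable_mult)
    show "norm (prob (Bad t)) \<le> (1 + 2 * beta_sum) * dl t" for t using prob_Bad[of t] by simp
  qed
  then have "AE x in M. eventually (\<lambda>t. x \<in> space M - Bad t) sequentially"
    by (intro borel_cantelli_AE1) (simp_all add: Bad_def estimate_bad_event_in_events less_top[symmetric])
  with AE_space show ?thesis
  proof eventually_elim
    case (elim x)
    from elim(2) show ?case
    proof (rule eventually_mono, intro ballI)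
      fix t m j assume "x \<in> space M - Bad t" "m \<in> {1..Ms t}" "j \<in> {1..ns t - m}"
      then have "\<bar>beta_hat_term (ls t) (tau_tilde ls ns eps dl t m) (ns t) x m j - cube_beta (ls t) (ns t) j m\<bar>
          \<le> 3 / 2 * 2 ^ (ls t * ns t) * \<eta> t"
        using eps[of t] by (intro beta_hat_term_close assms(2)) (auto simp: Bad_def estimate_bad_event_def \<eta>_def)
      then show "\<bar>beta_hat_term (ls t) (tau_tilde ls ns eps dl t m) (ns t) x m j
          - cube_beta (ls t) (ns t) j m\<bar> \<le> 3 / 4 * eps t" by (simp add: \<eta>_def)
    qed
  qed
qed

lemma eventually_test_accepts:
  assumes "class_R \<gamma> M" and ns_Ms: "\<And>t. ns t > Ms t"
    and close: "eventually (\<lambda>t. \<forall>m\<in>{1..Ms t}. \<forall>j\<in>{1..ns t - m}.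
      \<bar>beta_hat_term (ls t) (tau_tilde ls ns eps dl t m) (ns t) x m j - cube_beta (ls t) (ns t) j m\<bar>
        \<le> 3 / 4 * eps t) sequentially"
    and eps: "\<And>t. eps t > 0"
  shows "eventually (\<lambda>t. test_g \<gamma> Ms ls ns eps dl t x = 1) sequentially"
  using close
proof eventually_elim
  case (elim t)
  have "beta_hat_t ls ns eps dl t x m \<le> \<gamma> m + eps t" if m: "m \<in> {1..Ms t}" for m
  proof -
    have "beta_hat_term (ls t) (tau_tilde ls ns eps dl t m) (ns t) x m j \<le> \<gamma> m + eps t"
      if j: "j \<in> {1..ns t - m}" for j
    proof -
      have "cube_beta (ls t) (ns t) j m \<le> beta_coef M m"
        by (rule cube_beta_le_beta_coef) (use j in auto)
      also have "\<dots> \<le> \<gamma> m" using \<open>class_R \<gamma> M\<close> m unfolding class_R_def by auto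
      finally have "cube_beta (ls t) (ns t) j m \<le> \<gamma> m" .
      moreover have "beta_hat_term (ls t) (tau_tilde ls ns eps dl t m) (ns t) x m j
          \<le> cube_beta (ls t) (ns t) j m + 3 / 4 * eps t"
        using bspec[OF bspec[OF elim m] j] unfolding abs_diff_le_iff by (rule conjunct2)
      moreover have "3 / 4 * eps t \<le> eps t" using eps[of t] by simp
      ultimately show ?thesis by linarith
    qed
    moreover have "{1..ns t - m} \<noteq> {}" using m ns_Ms[of t] by auto
    ultimately show ?thesis unfolding beta_hat_t_def beta_hat_eq_Max by (simp add: Max_le_iff)
  qed
  then show ?case unfolding test_g_def by simp
qed

lemma eventually_test_rejects:
  assumes "\<not> class_R \<gamma> M" and mono: "strict_mono Ms" "strict_mono ls" "strict_mono ns"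
    and close: "eventually (\<lambda>t. \<forall>m\<in>{1..Ms t}. \<forall>j\<in>{1..ns t - m}.
      \<bar>beta_hat_term (ls t) (tau_tilde ls ns eps dl t m) (ns t) x m j - cube_beta (ls t) (ns t) j m\<bar>
        \<le> 3 / 4 * eps t) sequentially"
    and eps: "\<And>t. eps t > 0" "eps \<longlonglongrightarrow> 0"
  shows "eventually (\<lambda>t. test_g \<gamma> Ms ls ns eps dl t x = -1) sequentially"
proof -
  obtain m where m: "1 \<le> m" "\<gamma> m < beta_coef M m"
    using assms(1) unfolding class_R_def by (auto simp: not_le)
  obtain j y where j: "1 \<le> j" and y: "\<gamma> m < y"
    and "eventually (\<lambda>(l, n). y < cube_beta l n j m) (sequentially \<times>\<^sub>F sequentially)"
    using eventually_cube_beta_gt[OF m(2)] by blast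
  then have "eventually (\<lambda>t. y < cube_beta (ls t) (ns t) j m) sequentially"
    using filterlim_Pair[OF filterlim_subseq[OF mono(2)] filterlim_subseq[OF mono(3)]]
    by (auto dest: eventually_compose_filterlim)
  moreover have "eventually (\<lambda>t. m \<le> Ms t) sequentially" "eventually (\<lambda>t. j + m \<le> ns t) sequentially"
    using filterlim_subseq[OF mono(1)] filterlim_subseq[OF mono(3)]
    by (auto simp: filterlim_at_top)
  moreover have "eventually (\<lambda>t. eps t < (y - \<gamma> m) / 2) sequentially"
    using order_tendstoD(2)[OF eps(2), of "(y - \<gamma> m) / 2"] y by simp
  ultimately show ?thesis using close
  proof eventually_elim
    case (elim t)
    have m_t: "m \<in> {1..Ms t}" and j_t: "j \<in> {1..ns t - m}" using elim m j by auto
    have "beta_hat_term (ls t) (tau_tilde ls ns eps dl t m) (ns t) x m j \<le> beta_hat_t ls ns eps dl t x m"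
      unfolding beta_hat_t_def beta_hat_eq_Max by (rule Max_ge) (use j_t in auto)
    moreover have "y - 3 / 4 * eps t < beta_hat_term (ls t) (tau_tilde ls ns eps dl t m) (ns t) x m j"
    proof -
      have "\<bar>beta_hat_term (ls t) (tau_tilde ls ns eps dl t m) (ns t) x m j - cube_beta (ls t) (ns t) j m\<bar>
          \<le> 3 / 4 * eps t"
        using elim(5) m_t j_t by blast
      then have "cube_beta (ls t) (ns t) j m - 3 / 4 * eps t
          \<le> beta_hat_term (ls t) (tau_tilde ls ns eps dl t m) (ns t) x m j"
        unfolding abs_diff_le_iff by (rule conjunct1)
      then show ?thesis using elim(1) by linarith
    qed
    ultimately have "\<gamma> m + eps t < beta_hat_t ls ns eps dl t x m"
      using elim(4) eps(1)[of t] by (simp add: field_simps)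
    then show ?case using m_t unfolding test_g_def by force
  qed
qed

end

theorem theorem8:
  fixes \<gamma> :: "nat \<Rightarrow> real"
    and Ms ls ns :: "nat \<Rightarrow> nat"
    and \<delta> :: real and dl eps :: "nat \<Rightarrow> real"
    and \<mu> :: "(nat \<Rightarrow> real) measure"
  assumes rate: "\<And>m. \<gamma> m \<in> {0..1}"
    and Ms: "strict_mono Ms" "\<And>t. Ms t > 0"
    and ls: "strict_mono ls" "\<And>t. ls t > 0"
    and ns: "strict_mono ns" "\<And>t. ns t > 0"
    and ns_Ms: "\<And>t. ns t > Ms t"
    and delta: "0 < \<delta>" "\<delta> < 1" "\<And>t. dl t > 0" "dl sums \<delta>"
    and eps: "decseq eps" "\<And>t. eps t > 0" "eps \<longlonglongrightarrow> 0"
    and mu: "class_C \<mu>"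
  shows "AE \<omega> in \<mu>. (\<lambda>t. test_g \<gamma> Ms ls ns eps dl t \<omega>)
           \<longlonglongrightarrow> (if class_R \<gamma> \<mu> then 1 else -1)"
proof -
  from mu have "process_distribution \<mu>" "stationary \<mu>" "summable (\<lambda>m. beta_coef \<mu> (Suc m))"
    unfolding class_C_def by auto
  then interpret path_measure \<mu>
    by (simp add: path_measure_def path_measure_axioms_def process_distribution_def)
  have "AE x in \<mu>. eventually (\<lambda>t. \<forall>m\<in>{1..Ms t}. \<forall>j\<in>{1..ns t - m}.
      \<bar>beta_hat_term (ls t) (tau_tilde ls ns eps dl t m) (ns t) x m j - cube_beta (ls t) (ns t) j m\<bar>
        \<le> 3 / 4 * eps t) sequentially"
    by (rule AE_eventually_beta_hat_term_close[OF \<open>summable _\<close> \<open>stationary \<mu>\<close> ls(2) ns_Ms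
        delta(3,4) eps(2)])
  then show ?thesis
  proof eventually_elim
    case (elim x)
    then show ?case
      using eventually_test_accepts[OF _ ns_Ms elim eps(2)]
        eventually_test_rejects[OF _ Ms(1) ls(1) ns(1) elim eps(2,3)]
      by (cases "class_R \<gamma> \<mu>") (simp_all add: tendsto_eventually)
  qed
qed

end
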